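(* Let $G=[G^{(1)},\dots,G^{(p)}]\in\mathbb{R}^{n\times m}$ with $G^{(i)}\in\mathbb{R}^{n\times k_i}$ and $G^\top G=nI_m$, let $\sigma^2>0$ and $\gamma>0$, and consider the model: $\lambda_1,\dots,\lambda_p$ i.i.d. with density $p_\gamma(t)=\gamma e^{-\gamma t}$ on $t\ge0$; conditionally on $\lambda$, independent blocks $\theta^{(i)}\mid\lambda_i\sim\mathcal N(0,\lambda_iI_{k_i})$; $v\sim\mathcal N(0,\sigma^2I_n)$ independent; $y=\sum_iG^{(i)}\theta^{(i)}+v$. Then the estimator $$\{\hat\lambda_1(\gamma),\dots,\hat\lambda_p(\gamma)\}:=\arg\max_{\lambda\in\mathbb{R}_+^p}p(\lambda\mid y)=\arg\max_{\lambda\in\mathbb{R}_+^p}\int p(y,\theta\mid\lambda)\,p_\gamma(\lambda)\,d\theta$$ is given by $$\hat\lambda_i(\gamma)=\max\left(0,\ \frac{1}{4\gamma}\left[\sqrt{k_i^2+8\gamma\|\hat\theta_{LS}^{(i)}\|^2}-\Big(k_i+\frac{4\sigma^2\gamma}{n}\Big)\right]\right),$$ where $\hat\theta_{LS}^{(i)}=\frac1n(G^{(i)})^\top y$ is the least squares estimator of the $i$-th block. As $\gamma\to0$, $$\lim_{\gamma\to0}\hat\lambda_i(\gamma)=\max\left(0,\ \frac{\|\hat\theta_{LS}^{(i)}\|^2}{k_i}-\frac{\sigma^2}{n}\right).$$ In addition, for fixed $\bar\theta$, $$\mathbb{P}\big[\hat\lambda_i(\gamma)=0\mid\theta=\bar\theta\big]=\mathbb{P}\left[\chi^2\Big(k_i,\|\bar\theta^{(i)}\|^2\frac{n}{\sigma^2}\Big)\le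 k_i+2\gamma\frac{\sigma^2}{n}\right],$$ where $\chi^2(d,\mu)$ denotes a noncentral chi-squared random variable with $d$ degrees of freedom and noncentrality parameter $\mu$.
   Context: $\mathbb{R}_+=[0,\infty)$; $p(y,\theta\mid\lambda)$ is the joint density of $(y,\theta)$ given $\lambda$ under the stated model. Conditioning on $\theta=\bar\theta$ means $y=G\bar\theta+v$ with $v\sim\mathcal N(0,\sigma^2I_n)$. *)

theory Defs
  imports "HOL-Probability.Probability"
begin

text \<open>Block i (i < p) of the design matrix is G i :: row r (r < n) -> column j (j < k i) -> real.
  Parameters theta are indexed by pairs (i,j) with i < p, j < k i; hyperparameters lam by i < p.
  Vectors y in R^n are functions nat => real (only indices r < n matter).\<close>

definition blk_idx :: "nat \<Rightarrow> (nat \<Rightarrow> nat) \<Rightarrow> (nat \<times> nat) set" where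
  "blk_idx p k = (SIGMA i:{..<p}. {..<k i})"

definition Gtheta :: "(nat \<Rightarrow> nat \<Rightarrow> nat \<Rightarrow> real) \<Rightarrow> nat \<Rightarrow> (nat \<Rightarrow> nat) \<Rightarrow> (nat \<times> nat \<Rightarrow> real) \<Rightarrow> nat \<Rightarrow> real" where
  "Gtheta G p k th r = (\<Sum>(i,j)\<in>blk_idx p k. G i r j * th (i,j))"

definition gauss_meas :: "real \<Rightarrow> real measure" where
  "gauss_meas v = (if 0 < v then density lborel (normal_density 0 (sqrt v)) else return lborel 0)"

definition prior_theta :: "nat \<Rightarrow> (nat \<Rightarrow> nat) \<Rightarrow> (nat \<Rightarrow> real) \<Rightarrow> (nat \<times> nat \<Rightarrow> real) measure" where
  "prior_theta p k lam = PiM (blk_idx p k) (\<lambda>(i,j). gauss_meas (lam i))"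

definition lik :: "nat \<Rightarrow> (nat \<Rightarrow> nat \<Rightarrow> nat \<Rightarrow> real) \<Rightarrow> nat \<Rightarrow> (nat \<Rightarrow> nat) \<Rightarrow> real
    \<Rightarrow> (nat \<Rightarrow> real) \<Rightarrow> (nat \<times> nat \<Rightarrow> real) \<Rightarrow> real" where
  "lik n G p k sigma2 y th = (\<Prod>r<n. normal_density (Gtheta G p k th r) (sqrt sigma2) (y r))"

definition post_obj :: "nat \<Rightarrow> (nat \<Rightarrow> nat \<Rightarrow> nat \<Rightarrow> real) \<Rightarrow> nat \<Rightarrow> (nat \<Rightarrow> nat) \<Rightarrow> real \<Rightarrow> real
    \<Rightarrow> (nat \<Rightarrow> real) \<Rightarrow> (nat \<Rightarrow> real) \<Rightarrow> real" where
  "post_obj n G p k sigma2 gamma y lam =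
     (\<integral>th. lik n G p k sigma2 y th \<partial>prior_theta p k lam) * (\<Prod>i<p. exponential_density gamma (lam i))"

definition nonneg_params :: "nat \<Rightarrow> (nat \<Rightarrow> real) set" where
  "nonneg_params p = {lam. (\<forall>i<p. 0 \<le> lam i) \<and> (\<forall>i\<ge>p. lam i = 0)}"

definition argmax_post :: "nat \<Rightarrow> (nat \<Rightarrow> nat \<Rightarrow> nat \<Rightarrow> real) \<Rightarrow> nat \<Rightarrow> (nat \<Rightarrow> nat) \<Rightarrow> real \<Rightarrow> real
    \<Rightarrow> (nat \<Rightarrow> real) \<Rightarrow> (nat \<Rightarrow> real) set" where
  "argmax_post n G p k sigma2 gamma y =
     {lam \<in> nonneg_params p. \<forall>l \<in> nonneg_params p.
        post_obj n G p k sigma2 gamma y l \<le> post_obj n G p k sigma2 gamma y lam}"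

definition theta_LS :: "nat \<Rightarrow> (nat \<Rightarrow> nat \<Rightarrow> nat \<Rightarrow> real) \<Rightarrow> (nat \<Rightarrow> real) \<Rightarrow> nat \<Rightarrow> nat \<Rightarrow> real" where
  "theta_LS n G y i j = (1 / real n) * (\<Sum>r<n. G i r j * y r)"

definition normsq_LS :: "nat \<Rightarrow> (nat \<Rightarrow> nat \<Rightarrow> nat \<Rightarrow> real) \<Rightarrow> (nat \<Rightarrow> nat) \<Rightarrow> (nat \<Rightarrow> real) \<Rightarrow> nat \<Rightarrow> real" where
  "normsq_LS n G k y i = (\<Sum>j<k i. (theta_LS n G y i j)\<^sup>2)"

definition lamhat :: "nat \<Rightarrow> (nat \<Rightarrow> nat \<Rightarrow> nat \<Rightarrow> real) \<Rightarrow> nat \<Rightarrow> (nat \<Rightarrow> nat) \<Rightarrow> real \<Rightarrow> real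
    \<Rightarrow> (nat \<Rightarrow> real) \<Rightarrow> nat \<Rightarrow> real" where
  "lamhat n G p k sigma2 gamma y i =
     (if i < p then max 0 (1 / (4 * gamma) *
        (sqrt ((real (k i))\<^sup>2 + 8 * gamma * normsq_LS n G k y i)
         - (real (k i) + 4 * sigma2 * gamma / real n)))
      else 0)"

definition y_given_theta :: "nat \<Rightarrow> (nat \<Rightarrow> nat \<Rightarrow> nat \<Rightarrow> real) \<Rightarrow> nat \<Rightarrow> (nat \<Rightarrow> nat) \<Rightarrow> real
    \<Rightarrow> (nat \<times> nat \<Rightarrow> real) \<Rightarrow> (nat \<Rightarrow> real) measure" where
  "y_given_theta n G p k sigma2 thbar =
     PiM {..<n} (\<lambda>r. density lborel (normal_density (Gtheta G p k thbar r) (sqrt sigma2)))"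

text \<open>Noncentral chi-squared law chi2(d, mu): law of sum_{j<d} (Z_j + m_j)^2, Z_j i.i.d. N(0,1),
  with mean vector m = (sqrt mu, 0, ..., 0) (so that sum m_j^2 = mu).\<close>
definition nc_chi2 :: "nat \<Rightarrow> real \<Rightarrow> real measure" where
  "nc_chi2 d mu = distr (PiM {..<d} (\<lambda>_. density lborel std_normal_density)) borel
     (\<lambda>z. \<Sum>j<d. (z j + (if j = 0 then sqrt mu else 0))\<^sup>2)"

end

theory Submission
  imports Defs
begin

text \<open>Because the blocks of G are orthogonal with G^T G = n I, the likelihood factorises through the
  least-squares estimates, and integrating out theta turns the posterior of lambda into a product
  over the blocks of explicit one-dimensional functions of lambda_i. Each of these has a single
  critical point on the half-line, the positive root of a quadratic clipped at 0, which gives the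
  closed form; rationalising that root gives the limit gamma \<rightarrow> 0. Conditionally on theta, the
  statistic n |theta_LS^(i)|^2 / sigma2 is the squared norm of a shifted image of the Gaussian
  noise under a matrix with orthonormal rows. The standard Gaussian on R^n is invariant under
  rotations (each Givens rotation is a product of three shears, which preserve Lebesgue measure),
  so this image is again standard Gaussian and the shift may be rotated onto a coordinate axis:
  the statistic is noncentral chi-squared.\<close>

section \<open>Measure-preserving maps and finite products\<close>

definition measure_preserving :: "'a measure \<Rightarrow> ('a \<Rightarrow> 'a) \<Rightarrow> bool" where
  "measure_preserving M Q \<longleftrightarrow> Q \<in> M \<rightarrow>\<^sub>M M \<and> distr M M Q = M"

lemma measure_preserving_nn_integral:
  assumes Q: "measure_preserving M Q" and g: "g \<in> borel_measurable M"
  shows "(\<integral>\<^sup>+x. g (Q x) \<partial>M) = (\<integral>\<^sup>+x. g x \<partial>M)"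
proof -
  have Qm: "Q \<in> M \<rightarrow>\<^sub>M M" and QM: "distr M M Q = M"
    using Q by (simp_all add: measure_preserving_def)
  have "(\<integral>\<^sup>+x. g x \<partial>distr M M Q) = (\<integral>\<^sup>+x. g (Q x) \<partial>M)"
    by (rule nn_integral_distr[OF Qm]) (simp add: g)
  then show ?thesis unfolding QM by simp
qed

lemma measure_preservingI:
  assumes Q: "Q \<in> M \<rightarrow>\<^sub>M M"
    and eq: "\<And>g. g \<in> borel_measurable M \<Longrightarrow> (\<integral>\<^sup>+x. g (Q x) \<partial>M) = (\<integral>\<^sup>+x. g x \<partial>M)"
  shows "measure_preserving M Q"
  unfolding measure_preserving_def
proof (intro conjI Q measure_eqI)
  fix A assume "A \<in> sets (distr M M Q)"
  then have A[measurable]: "A \<in> sets M" by simp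
  have "emeasure (distr M M Q) A = (\<integral>\<^sup>+x. indicator A x \<partial>distr M M Q)"
    by simp
  also have "\<dots> = (\<integral>\<^sup>+x. indicator A (Q x) \<partial>M)"
    by (rule nn_integral_distr[OF Q]) simp
  also have "\<dots> = (\<integral>\<^sup>+x. indicator A x \<partial>M)"
    by (rule eq) simp
  finally show "emeasure (distr M M Q) A = emeasure M A" by simp
qed simp

lemma measure_preserving_comp:
  assumes "measure_preserving M Q1" "measure_preserving M Q2"
  shows "measure_preserving M (\<lambda>x. Q2 (Q1 x))"
  using assms distr_distr[of Q2 M M Q1 M]
  by (auto simp: measure_preserving_def comp_def intro: measurable_comp[unfolded comp_def])

lemma measure_preserving_cong:
  assumes "measure_preserving M Q" and "\<And>x. x \<in> space M \<Longrightarrow> Q' x = Q x"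
  shows "measure_preserving M Q'"
  using assms measurable_cong[of M Q' Q M] distr_cong[of M M M M Q' Q]
  by (simp add: measure_preserving_def)

lemma (in product_sigma_finite) PiM_density:
  assumes I: "finite I" and D: "product_sigma_finite (\<lambda>i. density (M i) (f i))"
    and f[measurable]: "\<And>i. i \<in> I \<Longrightarrow> f i \<in> borel_measurable (M i)"
  shows "PiM I (\<lambda>i. density (M i) (f i)) = density (PiM I M) (\<lambda>x. \<Prod>i\<in>I. f i (x i))"
proof -
  interpret D: product_sigma_finite "\<lambda>i. density (M i) (f i)" by (rule D)
  have F[measurable]: "(\<lambda>x. \<Prod>i\<in>I. f i (x i)) \<in> borel_measurable (PiM I M)"
    using I by measurable
  show ?thesis
  proof (rule D.PiM_eqI[OF I, symmetric])
    show "sets (density (PiM I M) (\<lambda>x. \<Prod>i\<in>I. f i (x i))) = sets (PiM I (\<lambda>i. density (M i) (f i)))"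
      by (simp cong: sets_PiM_cong)
    fix A assume A: "\<And>i. i \<in> I \<Longrightarrow> A i \<in> sets (density (M i) (f i))"
    then have A': "Pi\<^sub>E I A \<in> sets (PiM I M)" using I by (auto intro: sets_PiM_I_finite)
    have "emeasure (density (PiM I M) (\<lambda>x. \<Prod>i\<in>I. f i (x i))) (Pi\<^sub>E I A)
        = (\<integral>\<^sup>+x. (\<Prod>i\<in>I. f i (x i)) * indicator (Pi\<^sub>E I A) x \<partial>PiM I M)"
      using A' by (simp add: emeasure_density)
    also have "\<dots> = (\<integral>\<^sup>+x. (\<Prod>i\<in>I. f i (x i) * indicator (A i) (x i)) \<partial>PiM I M)"
    proof (rule nn_integral_cong)
      fix x assume "x \<in> space (PiM I M)"
      then show "(\<Prod>i\<in>I. f i (x i)) * indicator (Pi\<^sub>E I A) x = (\<Prod>i\<in>I. f i (x i) * indicator (A i) (x i))"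
        using I by (auto simp: prod.distrib indicator_def space_PiM PiE_def Pi_def prod.neutral_const
                         intro: prod_zero)
    qed
    also have "\<dots> = (\<Prod>i\<in>I. \<integral>\<^sup>+t. f i t * indicator (A i) t \<partial>M i)"
      using A I by (intro product_nn_integral_prod) auto
    also have "\<dots> = (\<Prod>i\<in>I. emeasure (density (M i) (f i)) (A i))"
      using A by (intro prod.cong) (auto simp: emeasure_density)
    finally show "emeasure (density (PiM I M) (\<lambda>x. \<Prod>i\<in>I. f i (x i))) (Pi\<^sub>E I A)
        = (\<Prod>i\<in>I. emeasure (density (M i) (f i)) (A i))" .
  qed
qed

lemma (in product_sigma_finite) product_nn_integral_remove:
  assumes "finite I" "i \<in> I" "f \<in> borel_measurable (PiM I M)"
  shows "integral\<^sup>N (PiM I M) f = (\<integral>\<^sup>+ x. (\<integral>\<^sup>+ y. f (x(i := y)) \<partial>M i) \<partial>PiM (I - {i}) M)"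
  using product_nn_integral_insert[of "I - {i}" i f] assms by (simp add: insert_absorb)

lemma measurable_fun_upd_pair:
  fixes M :: "real measure"
  assumes M: "sets M = sets borel"
  shows "(\<lambda>(x, y). x(i := y)) \<in> PiM I (\<lambda>_. borel) \<Otimes>\<^sub>M M \<rightarrow>\<^sub>M PiM (insert i I) (\<lambda>_. borel)"
proof (rule measurable_PiM_single')
  fix k assume k: "k \<in> insert i I"
  have "snd \<in> PiM I (\<lambda>_. borel) \<Otimes>\<^sub>M M \<rightarrow>\<^sub>M borel"
    using measurable_snd[of "PiM I (\<lambda>_. borel)" M] by (simp add: measurable_cong_sets[OF refl M])
  then show "(\<lambda>p. (case p of (x, y) \<Rightarrow> x(i := y)) k) \<in> PiM I (\<lambda>_. borel) \<Otimes>\<^sub>M M \<rightarrow>\<^sub>M borel"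
    using k by (cases "k = i") (auto simp: case_prod_beta)
qed (auto simp: space_pair_measure space_PiM PiE_def extensional_def)

lemma borel_measurable_nn_integral_update:
  fixes M :: "real measure"
  assumes M: "sigma_finite_measure M" "sets M = sets borel"
    and g: "g \<in> borel_measurable (PiM (insert i I) (\<lambda>_. borel))"
  shows "(\<lambda>x. \<integral>\<^sup>+y. g (x(i := y)) \<partial>M) \<in> borel_measurable (PiM I (\<lambda>_. borel))"
proof -
  have "(\<lambda>(x, y). g (x(i := y))) \<in> borel_measurable (PiM I (\<lambda>_. borel) \<Otimes>\<^sub>M M)"
    using measurable_comp[OF measurable_fun_upd_pair[OF M(2)] g] by (simp add: comp_def case_prod_beta)
  then show ?thesis by (rule sigma_finite_measure.borel_measurable_nn_integral[OF M(1)])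
qed

section \<open>The standard Gaussian measure on real vectors indexed by a finite set\<close>

abbreviation std_normal :: "real measure" where
  "std_normal \<equiv> density lborel std_normal_density"

definition product_lborel :: "'i set \<Rightarrow> ('i \<Rightarrow> real) measure" where
  "product_lborel I = PiM I (\<lambda>_. lborel)"

definition std_gaussian :: "'i set \<Rightarrow> ('i \<Rightarrow> real) measure" where
  "std_gaussian I = PiM I (\<lambda>_. std_normal)"

lemma prob_space_std_normal: "prob_space std_normal"
  using prob_space_normal_density by simp

interpretation lborel_product: product_sigma_finite "\<lambda>_::'i. lborel::real measure"
  by standard

interpretation std_normal_product: product_sigma_finite "\<lambda>_::'i. std_normal"
  by (simp add: product_sigma_finite_def prob_space_std_normal prob_space_imp_sigma_finite)

lemma sets_product_lborel[measurable_cong]: "sets (product_lborel I) = sets (PiM I (\<lambda>_. borel))"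
  unfolding product_lborel_def by (intro sets_PiM_cong) auto

lemma sets_std_gaussian[measurable_cong]: "sets (std_gaussian I) = sets (PiM I (\<lambda>_. borel))"
  unfolding std_gaussian_def by (intro sets_PiM_cong) auto

lemma space_product_lborel: "space (product_lborel I) = extensional I"
  unfolding product_lborel_def by (simp add: space_PiM PiE_def)

lemma space_std_gaussian: "space (std_gaussian I) = extensional I"
  unfolding std_gaussian_def by (simp add: space_PiM PiE_def)

lemma prob_space_std_gaussian: "prob_space (std_gaussian I)"
  unfolding std_gaussian_def by (rule prob_space_PiM) (rule prob_space_std_normal)

lemma std_gaussian_eq_density:
  assumes "finite I"
  shows "std_gaussian I = density (product_lborel I) (\<lambda>x. ennreal (\<Prod>i\<in>I. std_normal_density (x i)))"
proof -
  have "std_gaussian I = density (product_lborel I) (\<lambda>x. \<Prod>i\<in>I. ennreal (std_normal_density (x i)))"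
    unfolding std_gaussian_def product_lborel_def
    by (rule lborel_product.PiM_density[OF assms])
      (simp_all add: std_normal_product.product_sigma_finite_axioms)
  then show ?thesis by (simp add: prod_ennreal)
qed

lemma prod_std_normal_density:
  assumes "finite I"
  shows "(\<Prod>k\<in>I. std_normal_density (x k)) = (1 / sqrt (2 * pi)) ^ card I * exp (- (\<Sum>k\<in>I. (x k)\<^sup>2) / 2)"
proof -
  have "(\<Prod>k\<in>I. std_normal_density (x k)) = (\<Prod>k\<in>I. (1 / sqrt (2 * pi)) * exp (- (x k)\<^sup>2 / 2))"
    by (simp add: std_normal_density_def)
  also have "\<dots> = (1 / sqrt (2 * pi)) ^ card I * (\<Prod>k\<in>I. exp (- (x k)\<^sup>2 / 2))"
    by (rule trans[OF prod.distrib]) simp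
  also have "(\<Prod>k\<in>I. exp (- (x k)\<^sup>2 / 2)) = exp (- (\<Sum>k\<in>I. (x k)\<^sup>2) / 2)"
    using assms by (simp add: exp_sum[symmetric] sum_divide_distrib sum_negf)
  finally show ?thesis .
qed

lemma nn_integral_normal_density_affine:
  fixes h :: "real \<Rightarrow> ennreal"
  assumes s: "0 < \<sigma>" and h[measurable]: "h \<in> borel_measurable borel"
  shows "(\<integral>\<^sup>+y. h y \<partial>density lborel (normal_density \<mu> \<sigma>)) = (\<integral>\<^sup>+z. h (\<mu> + \<sigma> * z) \<partial>std_normal)"
proof -
  have std: "\<sigma> * normal_density \<mu> \<sigma> (\<mu> + \<sigma> * z) = std_normal_density z" for z
  proof -
    have "sqrt (2 * pi * \<sigma>\<^sup>2) = sqrt (2 * pi) * \<sigma>" using s by (simp add: real_sqrt_mult)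
    then show ?thesis unfolding normal_density_def using s by (simp add: power_mult_distrib)
  qed
  have "(\<integral>\<^sup>+y. h y \<partial>density lborel (normal_density \<mu> \<sigma>)) = (\<integral>\<^sup>+y. ennreal (normal_density \<mu> \<sigma> y) * h y \<partial>lborel)"
    by (rule nn_integral_density) auto
  also have "\<dots> = ennreal \<bar>\<sigma>\<bar> * (\<integral>\<^sup>+z. ennreal (normal_density \<mu> \<sigma> (\<mu> + \<sigma> * z)) * h (\<mu> + \<sigma> * z) \<partial>lborel)"
    by (rule nn_integral_real_affine) (use s in auto)
  also have "\<dots> = (\<integral>\<^sup>+z. ennreal (std_normal_density z) * h (\<mu> + \<sigma> * z) \<partial>lborel)"
    using s by (subst nn_integral_cmult[symmetric])
      (auto intro!: nn_integral_cong simp: mult.assoc[symmetric] ennreal_mult'[symmetric] std less_imp_le)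
  also have "\<dots> = (\<integral>\<^sup>+z. h (\<mu> + \<sigma> * z) \<partial>std_normal)"
    by (rule nn_integral_density[symmetric]) auto
  finally show ?thesis .
qed

lemma nn_integral_PiM_normal_density:
  fixes I :: "'i set" and m :: "'i \<Rightarrow> real" and f :: "('i \<Rightarrow> real) \<Rightarrow> ennreal"
  assumes s: "0 < \<sigma>" and "finite I" and "f \<in> borel_measurable (PiM I (\<lambda>_. borel))"
  shows "(\<integral>\<^sup>+y. f y \<partial>PiM I (\<lambda>r. density lborel (normal_density (m r) \<sigma>)))
       = (\<integral>\<^sup>+z. f (\<lambda>r\<in>I. m r + \<sigma> * z r) \<partial>std_gaussian I)"
  using assms(2,3)
proof (induction I arbitrary: f rule: finite_induct)
  case empty
  show ?case unfolding std_gaussian_def PiM_empty by (simp add: nn_integral_count_space_finite)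
next
  case (insert i I)
  note f[measurable] = insert.prems
  let ?N = "\<lambda>r. density lborel (normal_density (m r) \<sigma>)"
  interpret normal_product: product_sigma_finite ?N
    unfolding product_sigma_finite_def using prob_space_normal_density[OF s] prob_space_imp_sigma_finite by blast
  define h where "h = (\<lambda>x. \<integral>\<^sup>+y. f (x(i := y)) \<partial>?N i)"
  have hm: "h \<in> borel_measurable (PiM I (\<lambda>_. borel))"
    unfolding h_def using prob_space_normal_density[OF s]
    by (intro borel_measurable_nn_integral_update f) (simp_all add: prob_space_imp_sigma_finite)
  have "(\<integral>\<^sup>+y. f y \<partial>PiM (insert i I) ?N) = (\<integral>\<^sup>+x. h x \<partial>PiM I ?N)"
    unfolding h_def
    by (rule normal_product.product_nn_integral_insert[OF insert.hyps]) (simp cong: measurable_cong_sets)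
  also have "\<dots> = (\<integral>\<^sup>+z. h (\<lambda>r\<in>I. m r + \<sigma> * z r) \<partial>std_gaussian I)"
    by (rule insert.IH[OF hm])
  also have "\<dots> = (\<integral>\<^sup>+x. (\<integral>\<^sup>+y. f (\<lambda>r\<in>insert i I. m r + \<sigma> * (x(i := y)) r) \<partial>std_normal) \<partial>std_gaussian I)"
  proof (rule nn_integral_cong)
    fix x :: "'i \<Rightarrow> real"
    let ?w = "\<lambda>r\<in>I. m r + \<sigma> * x r"
    have "(\<lambda>y. ?w(i := y)) \<in> borel \<rightarrow>\<^sub>M PiM (insert i I) (\<lambda>_. borel)"
      using measurable_component_update[of ?w I "\<lambda>_. borel" i] insert.hyps(2) by (simp add: space_PiM)
    then have "(\<lambda>y. f (?w(i := y))) \<in> borel_measurable borel" by measurable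
    then have "h ?w = (\<integral>\<^sup>+y. f (?w(i := m i + \<sigma> * y)) \<partial>std_normal)"
      unfolding h_def by (rule nn_integral_normal_density_affine[OF s])
    moreover have "?w(i := m i + \<sigma> * y) = (\<lambda>r\<in>insert i I. m r + \<sigma> * (x(i := y)) r)" for y
      using insert.hyps(2) by (auto simp: fun_eq_iff)
    ultimately show "h ?w = (\<integral>\<^sup>+y. f (\<lambda>r\<in>insert i I. m r + \<sigma> * (x(i := y)) r) \<partial>std_normal)"
      by simp
  qed
  also have "\<dots> = (\<integral>\<^sup>+z. f (\<lambda>r\<in>insert i I. m r + \<sigma> * z r) \<partial>std_gaussian (insert i I))"
    unfolding std_gaussian_def
    by (rule std_normal_product.product_nn_integral_insert[OF insert.hyps, symmetric]) (simp cong: measurable_cong_sets)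
  finally show ?case .
qed

section \<open>Rotation invariance\<close>

lemma measure_preserving_product_lborel_coordinate:
  fixes h :: "('i \<Rightarrow> real) \<Rightarrow> real"
  assumes I: "finite I" "i \<in> I" and c: "\<bar>c\<bar> = 1"
    and h[measurable]: "h \<in> borel_measurable (PiM I (\<lambda>_. borel))"
    and h_indep: "\<And>x y. h (x(i := y)) = h x"
  shows "measure_preserving (product_lborel I) (\<lambda>x. \<lambda>k\<in>I. if k = i then c * x i + h x else x k)"
    (is "measure_preserving _ ?T")
proof (rule measure_preservingI)
  show T: "?T \<in> product_lborel I \<rightarrow>\<^sub>M product_lborel I"
    using I by measurable
  fix g :: "('i \<Rightarrow> real) \<Rightarrow> ennreal" assume g: "g \<in> borel_measurable (product_lborel I)"
  have gT: "(\<lambda>x. g (?T x)) \<in> borel_measurable (product_lborel I)"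
    using measurable_comp[OF T g] by (simp add: comp_def)
  let ?I' = "PiM (I - {i}) (\<lambda>_. lborel)"
  have "(\<integral>\<^sup>+x. g (?T x) \<partial>product_lborel I) = (\<integral>\<^sup>+x. (\<integral>\<^sup>+y. g (?T (x(i := y))) \<partial>lborel) \<partial>?I')"
    unfolding product_lborel_def
    by (rule lborel_product.product_nn_integral_remove[OF I gT[unfolded product_lborel_def]])
  also have "\<dots> = (\<integral>\<^sup>+x. (\<integral>\<^sup>+y. g (x(i := y)) \<partial>lborel) \<partial>?I')"
  proof (rule nn_integral_cong)
    fix x :: "'i \<Rightarrow> real" assume x: "x \<in> space ?I'"
    have "?T (x(i := y)) = x(i := h x + c * y)" for y :: real
      using x I h_indep by (auto simp: space_PiM PiE_def extensional_def fun_eq_iff)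
    moreover have "(\<lambda>y. x(i := y)) \<in> lborel \<rightarrow>\<^sub>M PiM I (\<lambda>_. lborel)"
      using measurable_component_update[OF x, of i] I by (simp add: insert_absorb)
    then have "(\<lambda>y. g (x(i := y))) \<in> borel_measurable borel"
      using measurable_comp g by (fastforce simp: product_lborel_def comp_def)
    ultimately show "(\<integral>\<^sup>+y. g (?T (x(i := y))) \<partial>lborel) = (\<integral>\<^sup>+y. g (x(i := y)) \<partial>lborel)"
      using nn_integral_real_affine[of "\<lambda>y. g (x(i := y))" c "h x"] c by auto
  qed
  also have "\<dots> = (\<integral>\<^sup>+x. g x \<partial>product_lborel I)"
    unfolding product_lborel_def
    by (rule lborel_product.product_nn_integral_remove[OF I g[unfolded product_lborel_def], symmetric])
  finally show "(\<integral>\<^sup>+x. g (?T x) \<partial>product_lborel I) = (\<integral>\<^sup>+x. g x \<partial>product_lborel I)" .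
qed

definition givens_rotation :: "'i set \<Rightarrow> 'i \<Rightarrow> 'i \<Rightarrow> real \<Rightarrow> real \<Rightarrow> ('i \<Rightarrow> real) \<Rightarrow> 'i \<Rightarrow> real" where
  "givens_rotation I i j c s x =
     (\<lambda>k\<in>I. if k = i then c * x i + s * x j else if k = j then - s * x i + c * x j else x k)"

lemma measure_preserving_product_lborel_givens:
  assumes I: "finite I" "i \<in> I" "j \<in> I" "i \<noteq> j" and cs: "c\<^sup>2 + s\<^sup>2 = 1" "c \<noteq> -1"
  shows "measure_preserving (product_lborel I) (givens_rotation I i j c s)"
proof -
  define u where "u = s / (1 + c)"
  \<comment> \<open>the rotation is the product of the shears by u, -s and u\<close>
  have c1: "1 + c \<noteq> 0" using cs by auto
  have us: "u * (1 + c) = s" using c1 by (simp add: u_def)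
  have su: "s * u = 1 - c"
  proof -
    have "s * u * (1 + c) = s * s" using us by (simp add: algebra_simps)
    also have "\<dots> = (1 - c) * (1 + c)" using cs by (simp add: power2_eq_square algebra_simps)
    finally show ?thesis using c1 by simp
  qed
  define S1 where "S1 = (\<lambda>x. \<lambda>k\<in>I. if k = i then 1 * x i + u * x j else x k)"
  define S2 where "S2 = (\<lambda>x. \<lambda>k\<in>I. if k = j then 1 * x j + - s * x i else x k)"
  have S1: "measure_preserving (product_lborel I) S1"
    unfolding S1_def using I
    by (intro measure_preserving_product_lborel_coordinate[OF I(1,2)]) (simp_all, measurable)
  have S2: "measure_preserving (product_lborel I) S2"
    unfolding S2_def using I
    by (intro measure_preserving_product_lborel_coordinate[OF I(1,3)]) (simp_all, measurable)
  have S121: "measure_preserving (product_lborel I) (\<lambda>x. S1 (S2 (S1 x)))"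
    using measure_preserving_comp[OF measure_preserving_comp[OF S1 S2] S1] by simp
  show ?thesis
  proof (rule measure_preserving_cong[OF S121])
    fix x
    have ri: "x i + u * x j + u * (x j + - s * (x i + u * x j)) = c * x i + s * x j"
    proof -
      have "x i + u * x j + u * (x j + - s * (x i + u * x j)) = (1 - s * u) * x i + (2 - s * u) * u * x j"
        by (simp add: algebra_simps)
      also have "\<dots> = c * x i + s * x j"
        unfolding su using us by (simp add: algebra_simps)
      finally show ?thesis .
    qed
    have rj: "x j + - s * (x i + u * x j) = - s * x i + c * x j"
    proof -
      have "x j + - s * (x i + u * x j) = - s * x i + (1 - s * u) * x j"
        by (simp add: algebra_simps)
      also have "\<dots> = - s * x i + c * x j"
        unfolding su by simp
      finally show ?thesis .
    qed
    show "givens_rotation I i j c s x = S1 (S2 (S1 x))"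
    proof
      fix k
      show "givens_rotation I i j c s x k = S1 (S2 (S1 x)) k"
        using I ri rj by (cases "k \<in> I"; cases "k = i"; cases "k = j")
          (simp_all add: givens_rotation_def S1_def S2_def)
    qed
  qed
qed

definition orthogonal_on :: "'i set \<Rightarrow> (('i \<Rightarrow> real) \<Rightarrow> 'i \<Rightarrow> real) \<Rightarrow> bool" where
  "orthogonal_on I Q \<longleftrightarrow> Q \<in> extensional I \<rightarrow> extensional I \<and>
     (\<forall>x\<in>extensional I. \<forall>y\<in>extensional I. (\<Sum>k\<in>I. Q x k * Q y k) = (\<Sum>k\<in>I. x k * y k))"

lemma orthogonal_on_norm:
  "orthogonal_on I Q \<Longrightarrow> x \<in> extensional I \<Longrightarrow> (\<Sum>k\<in>I. (Q x k)\<^sup>2) = (\<Sum>k\<in>I. (x k)\<^sup>2)"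
  unfolding orthogonal_on_def by (simp add: power2_eq_square)

lemma orthogonal_on_comp:
  "orthogonal_on I Q1 \<Longrightarrow> orthogonal_on I Q2 \<Longrightarrow> orthogonal_on I (\<lambda>x. Q2 (Q1 x))"
  unfolding orthogonal_on_def by (auto simp: Pi_iff)

lemma measure_preserving_std_gaussian:
  fixes I :: "'i set"
  assumes I: "finite I" and Q: "measure_preserving (product_lborel I) Q"
    and norm: "\<And>x. x \<in> extensional I \<Longrightarrow> (\<Sum>k\<in>I. (Q x k)\<^sup>2) = (\<Sum>k\<in>I. (x k)\<^sup>2)"
  shows "measure_preserving (std_gaussian I) Q"
proof (rule measure_preservingI)
  have Qm[measurable]: "Q \<in> PiM I (\<lambda>_. borel) \<rightarrow>\<^sub>M PiM I (\<lambda>_. borel)"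
    using Q measurable_cong_sets[OF sets_product_lborel[of I] sets_product_lborel[of I]]
    by (simp add: measure_preserving_def)
  then show "Q \<in> std_gaussian I \<rightarrow>\<^sub>M std_gaussian I"
    by (simp cong: measurable_cong_sets add: sets_std_gaussian)
  fix g :: "('i \<Rightarrow> real) \<Rightarrow> ennreal" assume g[measurable]: "g \<in> borel_measurable (std_gaussian I)"
  define \<phi> where "\<phi> = (\<lambda>x. ennreal (\<Prod>k\<in>I. std_normal_density (x k)))"
  have [measurable]: "\<phi> \<in> borel_measurable (PiM I (\<lambda>_. borel))"
    unfolding \<phi>_def by measurable
  have \<phi>Q: "\<phi> (Q x) = \<phi> x" if "x \<in> space (product_lborel I)" for x
    using that norm I by (simp add: \<phi>_def prod_std_normal_density space_product_lborel)
  have GI: "std_gaussian I = density (product_lborel I) \<phi>"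
    unfolding \<phi>_def by (rule std_gaussian_eq_density[OF I])
  have "(\<integral>\<^sup>+x. g (Q x) \<partial>std_gaussian I) = (\<integral>\<^sup>+x. \<phi> (Q x) * g (Q x) \<partial>product_lborel I)"
    unfolding GI by (subst nn_integral_density) (auto intro!: nn_integral_cong simp: \<phi>Q)
  also have "\<dots> = (\<integral>\<^sup>+x. \<phi> x * g x \<partial>product_lborel I)"
    by (rule measure_preserving_nn_integral[OF Q]) measurable
  also have "\<dots> = (\<integral>\<^sup>+x. g x \<partial>std_gaussian I)"
    unfolding GI by (subst nn_integral_density) auto
  finally show "(\<integral>\<^sup>+x. g (Q x) \<partial>std_gaussian I) = (\<integral>\<^sup>+x. g x \<partial>std_gaussian I)" .
qed

lemma orthogonal_on_givens:
  fixes I :: "'i set"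
  assumes I: "finite I" "i \<in> I" "j \<in> I" "i \<noteq> j" and cs: "c\<^sup>2 + s\<^sup>2 = 1"
  shows "orthogonal_on I (givens_rotation I i j c s)"
  unfolding orthogonal_on_def
proof (intro conjI ballI)
  show "givens_rotation I i j c s \<in> extensional I \<rightarrow> extensional I"
    by (simp add: givens_rotation_def)
  fix x y :: "'i \<Rightarrow> real"
  have split: "sum f I = f i + f j + sum f (I - {i, j})" for f :: "'i \<Rightarrow> real"
  proof -
    have "sum f I = f i + (f j + sum f (I - {i} - {j}))"
      using I by (simp add: sum.remove)
    also have "I - {i} - {j} = I - {i, j}" by auto
    finally show ?thesis by (simp add: add.assoc)
  qed
  let ?R = "givens_rotation I i j c s"
  have rest: "(\<Sum>k\<in>I - {i, j}. ?R x k * ?R y k) = (\<Sum>k\<in>I - {i, j}. x k * y k)"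
    by (rule sum.cong) (auto simp: givens_rotation_def)
  have "(\<Sum>k\<in>I. ?R x k * ?R y k) = ?R x i * ?R y i + ?R x j * ?R y j + (\<Sum>k\<in>I - {i, j}. x k * y k)"
    unfolding split[of "\<lambda>k. ?R x k * ?R y k"] rest ..
  also have "?R x i * ?R y i + ?R x j * ?R y j = (c\<^sup>2 + s\<^sup>2) * (x i * y i) + (c\<^sup>2 + s\<^sup>2) * (x j * y j)"
    using I by (simp add: givens_rotation_def power2_eq_square algebra_simps)
  finally show "(\<Sum>k\<in>I. ?R x k * ?R y k) = (\<Sum>k\<in>I. x k * y k)"
    using cs by (simp add: split[of "\<lambda>k. x k * y k"])
qed

lemma measure_preserving_std_gaussian_givens:
  assumes I: "finite I" "i \<in> I" "j \<in> I" "i \<noteq> j" and cs: "c\<^sup>2 + s\<^sup>2 = 1" "c \<noteq> -1"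
  shows "measure_preserving (std_gaussian I) (givens_rotation I i j c s)"
  using measure_preserving_std_gaussian[OF I(1) measure_preserving_product_lborel_givens[OF I cs]]
    orthogonal_on_norm[OF orthogonal_on_givens[OF I cs(1)]] by blast

lemma std_gaussian_sign_flip:
  fixes I :: "'i set" and c :: real
  assumes I: "finite I" "i \<in> I" and c: "\<bar>c\<bar> = 1"
  defines "F \<equiv> \<lambda>x. \<lambda>k\<in>I. if k = i then c * x i else x k"
  shows "measure_preserving (std_gaussian I) F \<and> orthogonal_on I F"
proof
  have cc: "c * c = 1" using c by (metis abs_mult_self_eq mult.right_neutral)
  show O: "orthogonal_on I F"
    unfolding orthogonal_on_def
  proof (intro conjI ballI)
    show "F \<in> extensional I \<rightarrow> extensional I" by (simp add: F_def)
    fix x y :: "'i \<Rightarrow> real"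
    have "(\<Sum>k\<in>I - {i}. F x k * F y k) = (\<Sum>k\<in>I - {i}. x k * y k)"
      by (rule sum.cong) (auto simp: F_def)
    moreover have "c * x i * (c * y i) = x i * y i" using cc by (simp add: algebra_simps)
    ultimately show "(\<Sum>k\<in>I. F x k * F y k) = (\<Sum>k\<in>I. x k * y k)"
      using I by (simp add: sum.remove F_def)
  qed
  have "measure_preserving (product_lborel I) F"
  proof (rule measure_preserving_cong)
    show "measure_preserving (product_lborel I) (\<lambda>x. \<lambda>k\<in>I. if k = i then c * x i + 0 else x k)"
      using I c by (intro measure_preserving_product_lborel_coordinate) simp_all
  qed (simp only: F_def add_0_right)
  then show "measure_preserving (std_gaussian I) F"
    using measure_preserving_std_gaussian[OF I(1)] orthogonal_on_norm[OF O] by blast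
qed

definition extend_map :: "'i set \<Rightarrow> 'i \<Rightarrow> (('i \<Rightarrow> real) \<Rightarrow> 'i \<Rightarrow> real) \<Rightarrow> ('i \<Rightarrow> real) \<Rightarrow> 'i \<Rightarrow> real" where
  "extend_map I i Q x = (\<lambda>k\<in>insert i I. if k = i then x i else Q (restrict x I) k)"

lemma measurable_extend_map:
  assumes Q: "Q \<in> PiM I (\<lambda>_. borel) \<rightarrow>\<^sub>M PiM I (\<lambda>_. borel :: real measure)"
  shows "extend_map I i Q \<in> PiM (insert i I) (\<lambda>_. borel) \<rightarrow>\<^sub>M PiM (insert i I) (\<lambda>_. borel)"
  unfolding extend_map_def
proof (rule measurable_restrict)
  fix k assume k: "k \<in> insert i I"
  have "(\<lambda>x. Q (restrict x I)) \<in> PiM (insert i I) (\<lambda>_. borel) \<rightarrow>\<^sub>M PiM I (\<lambda>_. borel)"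
    using measurable_comp[OF measurable_restrict_subset[of I "insert i I"] Q] by (auto simp: comp_def)
  then have "(\<lambda>x. Q (restrict x I) k) \<in> borel_measurable (PiM (insert i I) (\<lambda>_. borel))" if "k \<in> I"
    using measurable_comp[OF _ measurable_component_singleton[OF that]] by (auto simp: comp_def)
  then show "(\<lambda>x. if k = i then x i else Q (restrict x I) k) \<in> borel_measurable (PiM (insert i I) (\<lambda>_. borel))"
    using k by (cases "k = i") auto
qed

lemma extend_map_fun_upd:
  assumes Q: "Q \<in> extensional I \<rightarrow> extensional I" and i: "i \<notin> I" and x: "x \<in> extensional I"
  shows "extend_map I i Q (x(i := y)) = (Q x)(i := y)"
proof -
  have r: "restrict (x(i := y)) I = x" using x i by (auto simp: extensional_def fun_eq_iff)
  have "Q x \<in> extensional I" using Q x by auto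
  then show ?thesis
    using i unfolding extend_map_def r by (auto simp: extensional_def fun_eq_iff)
qed

lemma measure_preserving_std_gaussian_extend:
  fixes I :: "'i set"
  assumes I: "finite I" "i \<notin> I" and Q: "measure_preserving (std_gaussian I) Q"
  shows "measure_preserving (std_gaussian (insert i I)) (extend_map I i Q)"
proof (rule measure_preservingI)
  have Qm: "Q \<in> PiM I (\<lambda>_. borel) \<rightarrow>\<^sub>M PiM I (\<lambda>_. borel)"
    using Q measurable_cong_sets[OF sets_std_gaussian[of I] sets_std_gaussian[of I]]
    by (simp add: measure_preserving_def)
  have Qe: "Q \<in> extensional I \<rightarrow> extensional I"
    using measurable_space[OF Qm] by (auto simp: space_PiM PiE_def)
  have Em[measurable]: "extend_map I i Q \<in> PiM (insert i I) (\<lambda>_. borel) \<rightarrow>\<^sub>M PiM (insert i I) (\<lambda>_. borel)"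
    by (rule measurable_extend_map[OF Qm])
  then show "extend_map I i Q \<in> std_gaussian (insert i I) \<rightarrow>\<^sub>M std_gaussian (insert i I)"
    by (simp cong: measurable_cong_sets add: sets_std_gaussian)
  fix g :: "('i \<Rightarrow> real) \<Rightarrow> ennreal" assume g[measurable]: "g \<in> borel_measurable (std_gaussian (insert i I))"
  define H where "H = (\<lambda>z. \<integral>\<^sup>+y. g (z(i := y)) \<partial>std_normal)"
  have Hm: "H \<in> borel_measurable (std_gaussian I)"
    using borel_measurable_nn_integral_update[where M = std_normal and g = g] prob_space_std_normal
    by (simp add: H_def prob_space_imp_sigma_finite sets_std_gaussian cong: measurable_cong_sets)
  have "(\<integral>\<^sup>+x. g (extend_map I i Q x) \<partial>std_gaussian (insert i I))
      = (\<integral>\<^sup>+x. (\<integral>\<^sup>+y. g (extend_map I i Q (x(i := y))) \<partial>std_normal) \<partial>std_gaussian I)"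
    unfolding std_gaussian_def
    by (rule std_normal_product.product_nn_integral_insert[OF I]) (simp cong: measurable_cong_sets)
  also have "\<dots> = (\<integral>\<^sup>+x. H (Q x) \<partial>std_gaussian I)"
    by (rule nn_integral_cong) (simp add: H_def extend_map_fun_upd[OF Qe I(2)] space_std_gaussian)
  also have "\<dots> = (\<integral>\<^sup>+x. H x \<partial>std_gaussian I)"
    by (rule measure_preserving_nn_integral[OF Q Hm])
  also have "\<dots> = (\<integral>\<^sup>+x. g x \<partial>std_gaussian (insert i I))"
    unfolding std_gaussian_def H_def
    by (rule std_normal_product.product_nn_integral_insert[OF I, symmetric]) (simp cong: measurable_cong_sets)
  finally show "(\<integral>\<^sup>+x. g (extend_map I i Q x) \<partial>std_gaussian (insert i I)) = (\<integral>\<^sup>+x. g x \<partial>std_gaussian (insert i I))" .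
qed

lemma orthogonal_on_extend:
  fixes I :: "'i set"
  assumes I: "finite I" "i \<notin> I" and O: "orthogonal_on I Q"
  shows "orthogonal_on (insert i I) (extend_map I i Q)"
  unfolding orthogonal_on_def
proof (intro conjI ballI)
  show "extend_map I i Q \<in> extensional (insert i I) \<rightarrow> extensional (insert i I)"
    by (simp add: extend_map_def)
  fix x y :: "'i \<Rightarrow> real"
  have "(\<Sum>k\<in>I. extend_map I i Q x k * extend_map I i Q y k) = (\<Sum>k\<in>I. Q (restrict x I) k * Q (restrict y I) k)"
    using I by (intro sum.cong) (auto simp: extend_map_def)
  also have "\<dots> = (\<Sum>k\<in>I. x k * y k)"
    using O unfolding orthogonal_on_def by simp
  finally show "(\<Sum>k\<in>insert i I. extend_map I i Q x k * extend_map I i Q y k) = (\<Sum>k\<in>insert i I. x k * y k)"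
    using I by (simp add: extend_map_def)
qed

lemma givens_coefficients_exist:
  fixes a b :: real
  obtains c s where "c\<^sup>2 + s\<^sup>2 = 1" "c \<noteq> -1" "- s * a + c * b = 0"
proof (cases "b = 0")
  case True
  then show ?thesis using that[of 1 0] by simp
next
  case False
  define r where "r = sqrt (a\<^sup>2 + b\<^sup>2)"
  have pos: "0 < a\<^sup>2 + b\<^sup>2" using False by (simp add: add_nonneg_pos)
  then have r0: "0 < r" and r2: "r\<^sup>2 = a\<^sup>2 + b\<^sup>2" by (simp_all add: r_def)
  have "(a / r)\<^sup>2 + (b / r)\<^sup>2 = 1"
    using r0 r2 False by (simp add: power_divide add_divide_distrib[symmetric])
  moreover have "a / r \<noteq> -1"
  proof
    assume "a / r = -1"
    then have "a\<^sup>2 = r\<^sup>2" using r0 by (simp add: divide_eq_eq)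
    then show False using r2 False by simp
  qed
  moreover have "- (b / r) * a + a / r * b = 0" using r0 by (simp add: field_simps)
  ultimately show ?thesis by (rule that)
qed

lemma std_gaussian_givens_annihilate:
  fixes I :: "'i set" and a :: "'i \<Rightarrow> real"
  assumes I: "finite I" "i0 \<in> I" "i1 \<in> I" "i0 \<noteq> i1"
  obtains R where "measure_preserving (std_gaussian I) R" "orthogonal_on I R" "R (restrict a I) i1 = 0"
proof -
  obtain c s where cs: "c\<^sup>2 + s\<^sup>2 = 1" "c \<noteq> -1" "- s * a i0 + c * a i1 = 0"
    using givens_coefficients_exist by blast
  show ?thesis
  proof
    show "measure_preserving (std_gaussian I) (givens_rotation I i0 i1 c s)"
      by (rule measure_preserving_std_gaussian_givens[OF I cs(1,2)])
    show "orthogonal_on I (givens_rotation I i0 i1 c s)"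
      by (rule orthogonal_on_givens[OF I cs(1)])
    show "givens_rotation I i0 i1 c s (restrict a I) i1 = 0"
      using I cs by (simp add: givens_rotation_def)
  qed
qed

lemma std_gaussian_rotation_to_coordinate:
  fixes I :: "'i set" and a :: "'i \<Rightarrow> real"
  assumes "finite I" "i0 \<in> I" "(\<Sum>k\<in>I. (a k)\<^sup>2) = 1"
  shows "\<exists>Q. measure_preserving (std_gaussian I) Q \<and> orthogonal_on I Q
            \<and> (\<forall>x\<in>extensional I. Q x i0 = (\<Sum>k\<in>I. a k * x k))"
  using assms
proof (induction "card I" arbitrary: I a)
  case 0
  then show ?case by auto
next
  case (Suc n)
  show ?case
  proof (cases "I = {i0}")
    case True
    then have "\<bar>a i0\<bar> = 1" using Suc.prems(3) power2_eq_1_iff by fastforce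
    then show ?thesis
      using std_gaussian_sign_flip[OF Suc.prems(1,2), of "a i0"] True by fastforce
  next
    case False
    obtain i1 where i1: "i1 \<in> I" "i1 \<noteq> i0" using Suc.prems(2) False by auto
    define I' where "I' = I - {i1}"
    have I': "finite I'" "i1 \<notin> I'" "I = insert i1 I'" "i0 \<in> I'" "n = card I'"
      using Suc.prems Suc.hyps(2) i1 by (auto simp: I'_def)
    obtain R where R: "measure_preserving (std_gaussian I) R" "orthogonal_on I R" "R (restrict a I) i1 = 0"
      using std_gaussian_givens_annihilate[OF Suc.prems(1,2) i1(1) i1(2)[symmetric]] by blast
    define a' where "a' = R (restrict a I)"
    have a'i1: "a' i1 = 0" using R(3) by (simp add: a'_def)
    have "(\<Sum>k\<in>I. (a' k)\<^sup>2) = 1"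
      using orthogonal_on_norm[OF R(2), of "restrict a I"] Suc.prems(3) by (simp add: a'_def)
    then have "(\<Sum>k\<in>I'. (a' k)\<^sup>2) = 1"
      using a'i1 Suc.prems(1) i1 by (simp add: I'_def sum.remove)
    then obtain Q' where Q': "measure_preserving (std_gaussian I') Q'" "orthogonal_on I' Q'"
        "\<forall>x\<in>extensional I'. Q' x i0 = (\<Sum>k\<in>I'. a' k * x k)"
      using Suc.hyps(1)[OF I'(5) I'(1) I'(4)] by blast
    define Q where "Q = (\<lambda>x. extend_map I' i1 Q' (R x))"
    have "measure_preserving (std_gaussian I) (extend_map I' i1 Q')"
      using measure_preserving_std_gaussian_extend[OF I'(1,2) Q'(1)] I'(3) by simp
    then have "measure_preserving (std_gaussian I) Q"
      unfolding Q_def by (rule measure_preserving_comp[OF R(1)])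
    moreover have "orthogonal_on I (extend_map I' i1 Q')"
      using orthogonal_on_extend[OF I'(1,2) Q'(2)] I'(3) by simp
    then have "orthogonal_on I Q"
      unfolding Q_def by (rule orthogonal_on_comp[OF R(2)])
    moreover have "Q x i0 = (\<Sum>k\<in>I. a k * x k)" if x: "x \<in> extensional I" for x
    proof -
      have "Q x i0 = Q' (restrict (R x) I') i0" using I' i1 by (simp add: Q_def extend_map_def)
      also have "\<dots> = (\<Sum>k\<in>I'. a' k * R x k)" using Q'(3) by simp
      also have "\<dots> = (\<Sum>k\<in>I. a' k * R x k)"
        using a'i1 Suc.prems(1) i1 by (simp add: I'_def sum.remove)
      also have "\<dots> = (\<Sum>k\<in>I. a k * x k)"
        using R(2) x unfolding orthogonal_on_def a'_def by simp
      finally show ?thesis .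
    qed
    ultimately show ?thesis by blast
  qed
qed

lemma nn_integral_std_gaussian_split_row:
  fixes I :: "'i set" and J :: "'j set" and B :: "'j \<Rightarrow> 'i \<Rightarrow> real"
  assumes I: "finite I" "i0 \<in> I"
    and row: "B j0 i0 = 1" "\<And>i. i \<in> I - {i0} \<Longrightarrow> B j0 i = 0"
    and col: "\<And>j. j \<in> J \<Longrightarrow> j \<noteq> j0 \<Longrightarrow> B j i0 = 0"
    and g[measurable]: "g \<in> borel_measurable (PiM (insert j0 J) (\<lambda>_. borel))"
  shows "(\<integral>\<^sup>+u. g (\<lambda>j\<in>insert j0 J. \<Sum>i\<in>I. B j i * u i) \<partial>std_gaussian I)
       = (\<integral>\<^sup>+x. (\<integral>\<^sup>+y. g ((\<lambda>j\<in>J. \<Sum>i\<in>I - {i0}. B j i * x i)(j0 := y)) \<partial>std_normal)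
              \<partial>std_gaussian (I - {i0}))"
proof -
  have "(\<integral>\<^sup>+u. g (\<lambda>j\<in>insert j0 J. \<Sum>i\<in>I. B j i * u i) \<partial>std_gaussian I)
      = (\<integral>\<^sup>+x. (\<integral>\<^sup>+y. g (\<lambda>j\<in>insert j0 J. \<Sum>i\<in>I. B j i * (x(i0 := y)) i) \<partial>std_normal)
              \<partial>std_gaussian (I - {i0}))"
    unfolding std_gaussian_def
    by (rule std_normal_product.product_nn_integral_remove[OF I]) (simp cong: measurable_cong_sets)
  also have "\<dots> = (\<integral>\<^sup>+x. (\<integral>\<^sup>+y. g ((\<lambda>j\<in>J. \<Sum>i\<in>I - {i0}. B j i * x i)(j0 := y)) \<partial>std_normal)
              \<partial>std_gaussian (I - {i0}))"
  proof (intro nn_integral_cong arg_cong[where f = g] ext)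
    fix x :: "'i \<Rightarrow> real" and y :: real and j :: 'j
    have sum: "(\<Sum>i\<in>I. B j i * (if i = i0 then y else x i)) = B j i0 * y + (\<Sum>i\<in>I - {i0}. B j i * x i)"
      for j using I by (subst sum.remove[of I i0]) (auto intro!: sum.cong)
    have row0: "(\<Sum>i\<in>I - {i0}. B j0 i * x i) = 0"
      using row(2) by simp
    show "(\<lambda>j\<in>insert j0 J. \<Sum>i\<in>I. B j i * (x(i0 := y)) i) j = ((\<lambda>j\<in>J. \<Sum>i\<in>I - {i0}. B j i * x i)(j0 := y)) j"
      using row col row0
      by (cases "j = j0"; cases "j \<in> J") (simp_all add: sum)
  qed
  finally show ?thesis .
qed

lemma orthonormal_rows_drop_coordinate:
  fixes I :: "'i set" and B :: "'j \<Rightarrow> 'i \<Rightarrow> real"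
  assumes I: "finite I" "i0 \<in> I" and j0: "j0 \<notin> J"
    and orth: "\<forall>j\<in>insert j0 J. \<forall>j'\<in>insert j0 J. (\<Sum>i\<in>I. B j i * B j' i) = (if j = j' then 1 else 0)"
    and col: "\<And>j. j \<in> insert j0 J \<Longrightarrow> B j i0 = (if j = j0 then 1 else 0)"
  shows "\<forall>i\<in>I - {i0}. B j0 i = 0"
    and "\<forall>j\<in>J. \<forall>j'\<in>J. (\<Sum>i\<in>I - {i0}. B j i * B j' i) = (if j = j' then 1 else 0)"
proof -
  have sum_remove: "(\<Sum>i\<in>I. B j i * B j' i) = B j i0 * B j' i0 + (\<Sum>i\<in>I - {i0}. B j i * B j' i)" for j j'
    using I by (simp add: sum.remove)
  have "(\<Sum>i\<in>I - {i0}. (B j0 i)\<^sup>2) = 0"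
    using orth sum_remove[of j0 j0] col[of j0] by (simp add: power2_eq_square)
  then show "\<forall>i\<in>I - {i0}. B j0 i = 0"
    using I by (simp add: sum_nonneg_eq_0_iff)
  show "\<forall>j\<in>J. \<forall>j'\<in>J. (\<Sum>i\<in>I - {i0}. B j i * B j' i) = (if j = j' then 1 else 0)"
  proof (intro ballI)
    fix j j' assume j: "j \<in> J" "j' \<in> J"
    then have "B j i0 = 0" using col[of j] j0 by auto
    then show "(\<Sum>i\<in>I - {i0}. B j i * B j' i) = (if j = j' then 1 else 0)"
      using orth j sum_remove[of j j'] by simp
  qed
qed

lemma nn_integral_std_gaussian_orthonormal:
  fixes J :: "'j set" and I :: "'i set" and A :: "'j \<Rightarrow> 'i \<Rightarrow> real"
  assumes "finite J" "finite I"
    and "\<forall>j\<in>J. \<forall>j'\<in>J. (\<Sum>i\<in>I. A j i * A j' i) = (if j = j' then 1 else 0)"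
    and "g \<in> borel_measurable (PiM J (\<lambda>_. borel))"
  shows "(\<integral>\<^sup>+z. g (\<lambda>j\<in>J. \<Sum>i\<in>I. A j i * z i) \<partial>std_gaussian I) = (\<integral>\<^sup>+w. g w \<partial>std_gaussian J)"
  using assms
proof (induction J arbitrary: I A g rule: finite_induct)
  case empty
  interpret prob_space "std_gaussian I" by (rule prob_space_std_gaussian)
  show ?case
    unfolding std_gaussian_def[of "{}"]
    by (simp add: emeasure_space_1 PiM_empty nn_integral_count_space_finite)
next
  case (insert j0 J)
  note orth = insert.prems(2)
  note g[measurable] = insert.prems(3)
  have n1: "(\<Sum>i\<in>I. (A j0 i)\<^sup>2) = 1" using orth by (simp add: power2_eq_square)
  then have "I \<noteq> {}" by auto
  then obtain i0 where i0: "i0 \<in> I" by blast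
  obtain Q where Q: "measure_preserving (std_gaussian I) Q" "orthogonal_on I Q"
      "\<forall>x\<in>extensional I. Q x i0 = (\<Sum>k\<in>I. A j0 k * x k)"
    using std_gaussian_rotation_to_coordinate[OF insert.prems(1) i0 n1] by blast
  define B where "B = (\<lambda>j. Q (restrict (A j) I))"
  have AB: "(\<Sum>i\<in>I. A j i * z i) = (\<Sum>i\<in>I. B j i * Q z i)" if "z \<in> extensional I" for j z
    using Q(2) that unfolding orthogonal_on_def B_def by simp
  have BB: "(\<Sum>i\<in>I. B j i * B j' i) = (\<Sum>i\<in>I. A j i * A j' i)" for j j'
    using Q(2) unfolding orthogonal_on_def B_def by simp
  have B_i0: "B j i0 = (if j = j0 then 1 else 0)" if "j \<in> insert j0 J" for j
    using Q(3) orth that by (auto simp: B_def mult.commute)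
  have orthB: "\<forall>j\<in>insert j0 J. \<forall>j'\<in>insert j0 J. (\<Sum>i\<in>I. B j i * B j' i) = (if j = j' then 1 else 0)"
    using orth by (simp add: BB)
  note B_rest = orthonormal_rows_drop_coordinate[OF insert.prems(1) i0 insert.hyps(2) orthB B_i0]
  define h where "h = (\<lambda>w. \<integral>\<^sup>+y. g (w(j0 := y)) \<partial>std_normal)"
  have hm: "h \<in> borel_measurable (PiM J (\<lambda>_. borel))"
    unfolding h_def using prob_space_std_normal
    by (intro borel_measurable_nn_integral_update g) (simp_all add: prob_space_imp_sigma_finite)
  have "(\<integral>\<^sup>+z. g (\<lambda>j\<in>insert j0 J. \<Sum>i\<in>I. A j i * z i) \<partial>std_gaussian I)
      = (\<integral>\<^sup>+z. g (\<lambda>j\<in>insert j0 J. \<Sum>i\<in>I. B j i * Q z i) \<partial>std_gaussian I)"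
    by (intro nn_integral_cong) (simp add: AB space_std_gaussian)
  also have "\<dots> = (\<integral>\<^sup>+u. g (\<lambda>j\<in>insert j0 J. \<Sum>i\<in>I. B j i * u i) \<partial>std_gaussian I)"
    by (rule measure_preserving_nn_integral[OF Q(1)]) measurable
  also have "\<dots> = (\<integral>\<^sup>+x. h (\<lambda>j\<in>J. \<Sum>i\<in>I - {i0}. B j i * x i) \<partial>std_gaussian (I - {i0}))"
    unfolding h_def using B_i0 B_rest(1) insert.hyps(2)
    by (intro nn_integral_std_gaussian_split_row[OF insert.prems(1) i0]) auto
  also have "\<dots> = (\<integral>\<^sup>+w. h w \<partial>std_gaussian J)"
    using insert.prems(1) B_rest(2) hm by (intro insert.IH) auto
  also have "\<dots> = (\<integral>\<^sup>+w. g w \<partial>std_gaussian (insert j0 J))"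
    unfolding std_gaussian_def h_def
    by (rule std_normal_product.product_nn_integral_insert[OF insert.hyps, symmetric])
      (simp cong: measurable_cong_sets)
  finally show ?case .
qed

lemma sum_power2_add:
  fixes c u :: "'j \<Rightarrow> real"
  shows "(\<Sum>j\<in>J. (c j + u j)\<^sup>2) = (\<Sum>j\<in>J. (c j)\<^sup>2) + 2 * (\<Sum>j\<in>J. c j * u j) + (\<Sum>j\<in>J. (u j)\<^sup>2)"
  by (simp add: power2_sum sum.distrib sum_distrib_left mult.assoc)

text \<open>The rotation taking b / |b| to the j0-th coordinate vector preserves the standard Gaussian.\<close>

lemma nn_integral_std_gaussian_shift_norm:
  fixes J :: "'j set" and f :: "real \<Rightarrow> ennreal"
  assumes J: "finite J" "j0 \<in> J" and f[measurable]: "f \<in> borel_measurable borel"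
  shows "(\<integral>\<^sup>+w. f (\<Sum>j\<in>J. (b j + w j)\<^sup>2) \<partial>std_gaussian J)
       = (\<integral>\<^sup>+w. f (\<Sum>j\<in>J. ((if j = j0 then sqrt (\<Sum>k\<in>J. (b k)\<^sup>2) else 0) + w j)\<^sup>2) \<partial>std_gaussian J)"
proof -
  define r where "r = sqrt (\<Sum>k\<in>J. (b k)\<^sup>2)"
  define b' where "b' = (\<lambda>j. if j = j0 then r else 0)"
  have r2: "r\<^sup>2 = (\<Sum>k\<in>J. (b k)\<^sup>2)" by (simp add: r_def sum_nonneg)
  show ?thesis
  proof (cases "r = 0")
    case True
    then have "\<forall>k\<in>J. b k = 0" using J(1) r2 by (simp add: sum_nonneg_eq_0_iff)
    then have "(\<Sum>j\<in>J. (b j + w j)\<^sup>2) = (\<Sum>j\<in>J. (b' j + w j)\<^sup>2)" for w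
      using True by (intro sum.cong) (auto simp: b'_def)
    then show ?thesis unfolding b'_def r_def by simp
  next
    case False
    have "(\<Sum>k\<in>J. (b k / r)\<^sup>2) = 1"
      using False r2[symmetric] by (simp add: power_divide sum_divide_distrib[symmetric])
    then obtain Q where Q: "measure_preserving (std_gaussian J) Q" "orthogonal_on J Q"
        "\<forall>x\<in>extensional J. Q x j0 = (\<Sum>k\<in>J. b k / r * x k)"
      using std_gaussian_rotation_to_coordinate[OF J, of "\<lambda>k. b k / r"] by blast
    have norm: "(\<Sum>j\<in>J. (b' j + Q w j)\<^sup>2) = (\<Sum>j\<in>J. (b j + w j)\<^sup>2)" if w: "w \<in> extensional J" for w
    proof -
      have "(\<Sum>j\<in>J. (b' j)\<^sup>2) = (\<Sum>j\<in>J. if j = j0 then r\<^sup>2 else 0)"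
        "(\<Sum>j\<in>J. b' j * Q w j) = (\<Sum>j\<in>J. if j = j0 then r * Q w j else 0)"
        by (auto intro!: sum.cong simp: b'_def)
      then have "(\<Sum>j\<in>J. (b' j)\<^sup>2) = r\<^sup>2" "(\<Sum>j\<in>J. b' j * Q w j) = r * Q w j0"
        using J by simp_all
      moreover have "r * Q w j0 = (\<Sum>k\<in>J. b k * w k)"
        using Q(3) w False by (simp add: sum_distrib_left)
      ultimately show ?thesis
        using orthogonal_on_norm[OF Q(2) w] r2 by (simp add: sum_power2_add)
    qed
    have "(\<integral>\<^sup>+w. f (\<Sum>j\<in>J. (b j + w j)\<^sup>2) \<partial>std_gaussian J)
        = (\<integral>\<^sup>+w. f (\<Sum>j\<in>J. (b' j + Q w j)\<^sup>2) \<partial>std_gaussian J)"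
      by (intro nn_integral_cong) (simp add: norm space_std_gaussian)
    also have "\<dots> = (\<integral>\<^sup>+u. f (\<Sum>j\<in>J. (b' j + u j)\<^sup>2) \<partial>std_gaussian J)"
      using J by (intro measure_preserving_nn_integral[OF Q(1)]) measurable
    finally show ?thesis unfolding b'_def r_def .
  qed
qed

lemma measure_nc_chi2_atMost:
  "measure (nc_chi2 K \<mu>) {..c}
     = enn2real (\<integral>\<^sup>+w. indicator {..c} (\<Sum>j<K. ((if j = 0 then sqrt \<mu> else 0) + w j)\<^sup>2) \<partial>std_gaussian {..<K})"
proof -
  define \<psi> where "\<psi> = (\<lambda>z::nat \<Rightarrow> real. \<Sum>j<K. ((if j = 0 then sqrt \<mu> else 0) + z j)\<^sup>2)"
  have \<psi>m[measurable]: "\<psi> \<in> borel_measurable (std_gaussian {..<K})"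
    unfolding \<psi>_def by measurable
  have "nc_chi2 K \<mu> = distr (std_gaussian {..<K}) borel \<psi>"
    unfolding nc_chi2_def std_gaussian_def \<psi>_def by (simp add: add.commute)
  then have "measure (nc_chi2 K \<mu>) {..c} = measure (std_gaussian {..<K}) (\<psi> -` {..c} \<inter> space (std_gaussian {..<K}))"
    by (simp add: measure_distr)
  also have "\<dots> = enn2real (\<integral>\<^sup>+w. indicator {..c} (\<psi> w) \<partial>std_gaussian {..<K})"
    by (simp add: measure_def nn_integral_indicator[symmetric] indicator_def
        cong: nn_integral_cong_simp)
  finally show ?thesis unfolding \<psi>_def .
qed

section \<open>The one-dimensional maximisation\<close>

definition shrinkage :: "real \<Rightarrow> real \<Rightarrow> real \<Rightarrow> real \<Rightarrow> real" where
  "shrinkage a g K S = max 0 (1 / (4 * g) * (sqrt (K\<^sup>2 + 8 * g * S) - (K + 4 * a * g)))"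

lemma shrinkage_eq_0_iff:
  assumes a: "0 < a" and g: "0 < g" and K: "0 \<le> K" and S: "0 \<le> S"
  shows "shrinkage a g K S = 0 \<longleftrightarrow> S / a \<le> K + 2 * g * a"
proof -
  have R: "0 \<le> K + 4 * a * g" using a g K by simp
  have "shrinkage a g K S = 0 \<longleftrightarrow> 1 / (4 * g) * (sqrt (K\<^sup>2 + 8 * g * S) - (K + 4 * a * g)) \<le> 0"
    by (simp add: shrinkage_def max_def)
  also have "\<dots> \<longleftrightarrow> sqrt (K\<^sup>2 + 8 * g * S) \<le> K + 4 * a * g"
    using g by (simp add: divide_le_0_iff)
  also have "\<dots> \<longleftrightarrow> K\<^sup>2 + 8 * g * S \<le> (K + 4 * a * g)\<^sup>2"
    using R by (blast intro: real_le_lsqrt sqrt_le_D)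
  also have "\<dots> \<longleftrightarrow> 8 * g * S \<le> 8 * g * (a * (K + 2 * g * a))"
    by (simp add: power2_eq_square algebra_simps)
  also have "\<dots> \<longleftrightarrow> S / a \<le> K + 2 * g * a"
    using a g by (simp add: pos_divide_le_eq mult.commute)
  finally show ?thesis .
qed

lemma tendsto_shrinkage:
  assumes K: "0 < K" and S: "0 \<le> S"
  shows "((\<lambda>g. shrinkage a g K S) \<longlongrightarrow> max 0 (S / K - a)) (at_right 0)"
proof -
  define h where "h = (\<lambda>g::real. max 0 (2 * S / (sqrt (K\<^sup>2 + 8 * g * S) + K) - a))"
  \<comment> \<open>rationalising the numerator removes the singularity at g = 0\<close>
  have "h g = shrinkage a g K S" if g: "0 < g" for g
  proof -
    define D where "D = sqrt (K\<^sup>2 + 8 * g * S)"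
    have D2: "D\<^sup>2 = K\<^sup>2 + 8 * g * S" and DK: "0 < D + K"
      unfolding D_def using g S K by (simp_all add: add_nonneg_pos)
    have "(D - K) * (D + K) = 8 * g * S" using D2 by (simp add: power2_eq_square algebra_simps)
    then have "1 / (4 * g) * (D - (K + 4 * a * g)) = 2 * S / (D + K) - a"
      using g DK by (simp add: field_simps)
    then show ?thesis unfolding h_def shrinkage_def D_def by simp
  qed
  then have "eventually (\<lambda>g. h g = shrinkage a g K S) (at_right 0)"
    by (auto simp: eventually_at_filter)
  moreover have "(h \<longlongrightarrow> h 0) (at_right 0)"
    unfolding h_def using K S
    by (intro tendsto_intros) (auto intro!: tendsto_eq_intros simp: add_pos_nonneg)
  moreover have "h 0 = max 0 (S / K - a)" unfolding h_def using K by simp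
  ultimately show ?thesis using tendsto_cong by fastforce
qed

definition log_block_objective :: "real \<Rightarrow> real \<Rightarrow> real \<Rightarrow> real \<Rightarrow> real \<Rightarrow> real" where
  "log_block_objective a g K S x = - (K / 2) * ln (a + x) - (S / 2) * inverse (a + x) - g * x"

lemma has_real_derivative_log_block_objective:
  assumes "0 < a + x"
  shows "(log_block_objective a g K S has_real_derivative
          (S - K * (a + x) - 2 * g * (a + x)\<^sup>2) / (2 * (a + x)\<^sup>2)) (at x)"
proof -
  have ne: "a + x \<noteq> 0" using assms by simp
  have dax: "((\<lambda>x. a + x) has_real_derivative 1) (at x)"
    using DERIV_add[OF DERIV_const[of a] DERIV_ident] by simp
  have "(log_block_objective a g K S has_real_derivative
      - (K / 2) * (inverse (a + x) * 1) - (S / 2) * (- (inverse (a + x) * 1 * inverse (a + x))) - g * 1) (at x)"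
    unfolding log_block_objective_def
    by (intro DERIV_diff DERIV_cmult DERIV_chain2[OF DERIV_ln[OF assms] dax] DERIV_inverse'[OF dax ne]
        DERIV_ident)
  moreover have "- (K / 2) * (inverse v * 1) - (S / 2) * (- (inverse v * 1 * inverse v)) - g * 1
      = (S - K * v - 2 * g * v\<^sup>2) / (2 * v\<^sup>2)" if "v \<noteq> 0" for v :: real
    using that by (simp add: inverse_eq_divide field_simps power2_eq_square)
  ultimately show ?thesis using ne by simp
qed

text \<open>The numerator of the derivative is a concave quadratic in a + x whose positive root is
  a + shrinkage a g K S (when the shrinkage is positive), so the objective increases up to the
  shrinkage and decreases after it.\<close>

lemma log_block_objective_less:
  assumes a: "0 < a" and g: "0 < g" and K: "0 < K" and S: "0 \<le> S"
    and l: "0 \<le> l" "l \<noteq> shrinkage a g K S"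
  shows "log_block_objective a g K S l < log_block_objective a g K S (shrinkage a g K S)"
proof -
  define lh where "lh = shrinkage a g K S"
  define D where "D = sqrt (K\<^sup>2 + 8 * g * S)"
  define u where "u = (D - K) / (4 * g)"
  have D2: "D\<^sup>2 = K\<^sup>2 + 8 * g * S" and DK: "K \<le> D"
    unfolding D_def using g S K by (simp_all add: real_le_rsqrt)
  have u0: "0 \<le> u" unfolding u_def using DK g by simp
  have root: "S - K * v - 2 * g * v\<^sup>2 = - (v - u) * (K + 2 * g * (v + u))" for v
  proof -
    have "2 * g * u\<^sup>2 + K * u = S"
      unfolding u_def using g D2 by (simp add: field_simps power2_eq_square)
    then show ?thesis by (simp add: power2_eq_square algebra_simps)
  qed
  have lh: "lh = max 0 (u - a)"
    unfolding lh_def shrinkage_def D_def[symmetric] u_def using g by (simp add: field_simps)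
  have deriv: "(log_block_objective a g K S has_real_derivative
          - (a + x - u) * (K + 2 * g * (a + x + u)) / (2 * (a + x)\<^sup>2)) (at x)" if "0 \<le> x" for x
    using has_real_derivative_log_block_objective[of a x g K S] a that by (simp add: root)
  have "isCont (log_block_objective a g K S) x" if "0 < a + x" for x
    using has_real_derivative_log_block_objective[OF that] by (rule DERIV_isCont)
  then have cont: "continuous_on {x0..x1} (log_block_objective a g K S)" if "0 \<le> x0" for x0 x1
    using that a by (intro continuous_at_imp_continuous_on ballI) auto
  show ?thesis
  proof (cases "lh < l")
    case True
    have "\<exists>y. (log_block_objective a g K S has_real_derivative y) (at x) \<and> y < 0" if "lh < x" "x < l" for x
    proof -
      have "- (a + x - u) * (K + 2 * g * (a + x + u)) / (2 * (a + x)\<^sup>2) < 0"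
        using that lh a K g u0 by (intro divide_neg_pos mult_neg_pos add_pos_nonneg) auto
      then show ?thesis using deriv[of x] that lh by auto
    qed
    then show ?thesis
      using DERIV_neg_imp_decreasing_open[OF True _ cont] lh unfolding lh_def by auto
  next
    case False
    then have "l < lh" using l lh_def by simp
    moreover have "\<exists>y. (log_block_objective a g K S has_real_derivative y) (at x) \<and> 0 < y" if "l < x" "x < lh" for x
    proof -
      have "a + x < u" using that lh l(1) by (simp add: max_def split: if_splits)
      then have "0 < - (a + x - u) * (K + 2 * g * (a + x + u)) / (2 * (a + x)\<^sup>2)"
        using that a K g u0 l(1) by (intro divide_pos_pos mult_pos_pos add_pos_nonneg) auto
      then show ?thesis using deriv[of x] that l(1) by auto
    qed
    ultimately show ?thesis
      using DERIV_pos_imp_increasing_open[of l lh] cont[OF l(1)] unfolding lh_def by blast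
  qed
qed

definition block_objective :: "real \<Rightarrow> real \<Rightarrow> nat \<Rightarrow> real \<Rightarrow> real \<Rightarrow> real" where
  "block_objective a g K S l = sqrt (a / (a + l)) ^ K * exp (- S / (2 * (a + l))) * exponential_density g l"

lemma block_objective_eq_exp:
  assumes a: "0 < a" and g: "0 < g" and l: "0 \<le> l"
  shows "block_objective a g K S l = exp (real K / 2 * ln a + ln g + log_block_objective a g (real K) S l)"
proof -
  have al: "0 < a + l" using a l by simp
  have "sqrt (a / (a + l)) ^ K = exp (ln (sqrt (a / (a + l)) ^ K))"
    using a al by simp
  also have "\<dots> = exp (real K * ((ln a - ln (a + l)) / 2))"
    using a al by (simp add: ln_realpow ln_sqrt ln_div)
  finally have "sqrt (a / (a + l)) ^ K = exp (real K * ((ln a - ln (a + l)) / 2))" .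
  moreover have "exponential_density g l = exp (ln g) * exp (- l * g)"
    using g l by (simp add: exponential_density_def)
  ultimately show ?thesis
    unfolding block_objective_def log_block_objective_def
    by (simp add: exp_add[symmetric] field_simps)
qed

lemma block_objective_less:
  assumes "0 < a" "0 < g" "0 < K" "0 \<le> S" "0 \<le> l" "l \<noteq> shrinkage a g (real K) S"
  shows "block_objective a g K S l < block_objective a g K S (shrinkage a g (real K) S)"
  using assms log_block_objective_less[of a g "real K" S l]
  by (simp add: block_objective_eq_exp shrinkage_def)

lemma block_objective_pos: "0 < a \<Longrightarrow> 0 < g \<Longrightarrow> 0 \<le> l \<Longrightarrow> 0 < block_objective a g K S l"
  by (simp add: block_objective_eq_exp)

section \<open>The block Gaussian model\<close>

definition design_orthogonal :: "nat \<Rightarrow> (nat \<Rightarrow> nat \<Rightarrow> nat \<Rightarrow> real) \<Rightarrow> nat \<Rightarrow> (nat \<Rightarrow> nat) \<Rightarrow> bool" where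
  "design_orthogonal n G p k \<longleftrightarrow> (\<forall>i<p. \<forall>i'<p. \<forall>j<k i. \<forall>j'<k i'.
     (\<Sum>r<n. G i r j * G i' r j') = (if i = i' \<and> j = j' then real n else 0))"

lemma finite_blk_idx[simp]: "finite (blk_idx p k)"
  unfolding blk_idx_def by auto

lemma Gtheta_eq_sum: "Gtheta G p k th r = (\<Sum>q\<in>blk_idx p k. G (fst q) r (snd q) * th q)"
  unfolding Gtheta_def by (simp add: case_prod_beta)

lemma sum_G_Gtheta:
  assumes orth: "design_orthogonal n G p k" and ij: "i < p" "j < k i"
  shows "(\<Sum>r<n. G i r j * Gtheta G p k th r) = real n * th (i, j)"
proof -
  have "(\<Sum>r<n. G i r j * Gtheta G p k th r) = (\<Sum>r<n. \<Sum>q\<in>blk_idx p k. G i r j * (G (fst q) r (snd q) * th q))"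
    unfolding Gtheta_eq_sum by (simp add: sum_distrib_left)
  also have "\<dots> = (\<Sum>q\<in>blk_idx p k. \<Sum>r<n. G i r j * (G (fst q) r (snd q) * th q))"
    by (rule sum.swap)
  also have "\<dots> = (\<Sum>q\<in>blk_idx p k. th q * (\<Sum>r<n. G i r j * G (fst q) r (snd q)))"
    by (simp add: sum_distrib_left algebra_simps)
  also have "\<dots> = (\<Sum>q\<in>blk_idx p k. if q = (i, j) then real n * th q else 0)"
  proof (rule sum.cong)
    fix q assume "q \<in> blk_idx p k"
    then have "(\<Sum>r<n. G i r j * G (fst q) r (snd q)) = (if i = fst q \<and> j = snd q then real n else 0)"
      using orth ij by (auto simp: blk_idx_def design_orthogonal_def)
    then show "th q * (\<Sum>r<n. G i r j * G (fst q) r (snd q)) = (if q = (i, j) then real n * th q else 0)"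
      by (cases q) auto
  qed simp
  also have "\<dots> = real n * th (i, j)"
    using ij by (simp add: sum.delta' blk_idx_def)
  finally show ?thesis .
qed

lemma prob_space_gauss_meas: "prob_space (gauss_meas v)"
  unfolding gauss_meas_def by (auto intro: prob_space_normal_density prob_space_return)

lemma sets_gauss_meas[measurable_cong]: "sets (gauss_meas v) = sets borel"
  unfolding gauss_meas_def by auto

lemma integral_gauss_meas_gaussian_kernel:
  fixes a v t :: real
  assumes a: "0 < a" and v: "0 \<le> v"
  shows "(\<integral>\<theta>. exp (- (\<theta> - t)\<^sup>2 / (2 * a)) \<partial>gauss_meas v) = sqrt (a / (a + v)) * exp (- t\<^sup>2 / (2 * (a + v)))"
proof (cases "v = 0")
  case True
  then show ?thesis using a by (simp add: gauss_meas_def integral_return)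
next
  case False
  then have v0: "0 < v" using v by simp
  have av: "0 < a + v" using a v by simp
  have kernel: "exp (- (\<theta> - t)\<^sup>2 / (2 * a)) = sqrt (2 * pi * a) * normal_density 0 (sqrt a) (t - \<theta>)" for \<theta>
    unfolding normal_density_def using a by (simp add: power2_commute)
  have "(\<integral>\<^sup>+\<theta>. ennreal (normal_density 0 (sqrt v) \<theta> * exp (- (\<theta> - t)\<^sup>2 / (2 * a))) \<partial>lborel)
      = (\<integral>\<^sup>+\<theta>. ennreal (sqrt (2 * pi * a)) * ennreal (normal_density 0 (sqrt a) (t - \<theta>) * normal_density 0 (sqrt v) \<theta>) \<partial>lborel)"
    unfolding kernel using a by (intro nn_integral_cong) (simp add: ennreal_mult'[symmetric] mult_ac)
  also have "\<dots> = ennreal (sqrt (2 * pi * a)) * normal_density 0 (sqrt (a + v)) t"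
    using fun_cong[OF conv_normal_density_zero_mean[of "sqrt a" "sqrt v"], of t] a v0
    by (simp add: nn_integral_cmult)
  also have "\<dots> = ennreal (sqrt (2 * pi * a) * normal_density 0 (sqrt (a + v)) t)"
    using a by (simp add: ennreal_mult)
  finally have nn: "(\<integral>\<^sup>+\<theta>. ennreal (normal_density 0 (sqrt v) \<theta> * exp (- (\<theta> - t)\<^sup>2 / (2 * a))) \<partial>lborel)
      = ennreal (sqrt (2 * pi * a) * normal_density 0 (sqrt (a + v)) t)" .
  have "(\<integral>\<theta>. exp (- (\<theta> - t)\<^sup>2 / (2 * a)) \<partial>gauss_meas v)
      = (\<integral>\<theta>. normal_density 0 (sqrt v) \<theta> * exp (- (\<theta> - t)\<^sup>2 / (2 * a)) \<partial>lborel)"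
    unfolding gauss_meas_def using v0 by (simp add: integral_density)
  also have "\<dots> = enn2real (\<integral>\<^sup>+\<theta>. ennreal (normal_density 0 (sqrt v) \<theta> * exp (- (\<theta> - t)\<^sup>2 / (2 * a))) \<partial>lborel)"
    by (rule integral_eq_nn_integral) auto
  also have "\<dots> = sqrt (2 * pi * a) * normal_density 0 (sqrt (a + v)) t"
    unfolding nn using a by simp
  also have "\<dots> = sqrt (a / (a + v)) * exp (- t\<^sup>2 / (2 * (a + v)))"
    unfolding normal_density_def using a av by (simp add: real_sqrt_divide real_sqrt_mult)
  finally show ?thesis .
qed

lemma sum_residual_sq_eq:
  fixes y :: "nat \<Rightarrow> real"
  assumes n_pos: "0 < n" and orth: "design_orthogonal n G p k"
  defines "t \<equiv> \<lambda>q. theta_LS n G y (fst q) (snd q)"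
  shows "(\<Sum>r<n. (y r - Gtheta G p k th r)\<^sup>2)
       = (\<Sum>r<n. (y r)\<^sup>2) - real n * (\<Sum>q\<in>blk_idx p k. (t q)\<^sup>2) + real n * (\<Sum>q\<in>blk_idx p k. (th q - t q)\<^sup>2)"
proof -
  let ?B = "blk_idx p k"
  have yG: "(\<Sum>r<n. y r * Gtheta G p k th r) = real n * (\<Sum>q\<in>?B. th q * t q)"
  proof -
    have "(\<Sum>r<n. y r * Gtheta G p k th r) = (\<Sum>r<n. \<Sum>q\<in>?B. th q * (G (fst q) r (snd q) * y r))"
      unfolding Gtheta_eq_sum by (simp add: sum_distrib_left mult_ac)
    also have "\<dots> = (\<Sum>q\<in>?B. th q * (\<Sum>r<n. G (fst q) r (snd q) * y r))"
      by (subst sum.swap) (simp add: sum_distrib_left)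
    finally show ?thesis
      using n_pos by (simp add: t_def theta_LS_def sum_distrib_left)
  qed
  have GG: "(\<Sum>r<n. (Gtheta G p k th r)\<^sup>2) = real n * (\<Sum>q\<in>?B. (th q)\<^sup>2)"
  proof -
    have "(\<Sum>r<n. (Gtheta G p k th r)\<^sup>2) = (\<Sum>r<n. \<Sum>q\<in>?B. th q * (G (fst q) r (snd q) * Gtheta G p k th r))"
      unfolding power2_eq_square by (subst (2) Gtheta_eq_sum) (simp add: sum_distrib_left sum_distrib_right mult_ac)
    also have "\<dots> = (\<Sum>q\<in>?B. th q * (\<Sum>r<n. G (fst q) r (snd q) * Gtheta G p k th r))"
      by (subst sum.swap) (simp add: sum_distrib_left)
    also have "\<dots> = (\<Sum>q\<in>?B. real n * (th q)\<^sup>2)"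
      by (intro sum.cong) (auto simp: blk_idx_def sum_G_Gtheta[OF orth] power2_eq_square)
    finally show ?thesis by (simp add: sum_distrib_left)
  qed
  have "(\<Sum>r<n. (y r - Gtheta G p k th r)\<^sup>2)
      = (\<Sum>r<n. (y r)\<^sup>2) - 2 * (\<Sum>r<n. y r * Gtheta G p k th r) + (\<Sum>r<n. (Gtheta G p k th r)\<^sup>2)"
    by (simp add: power2_diff sum.distrib sum_subtractf sum_distrib_left mult.assoc)
  also have "\<dots> = (\<Sum>r<n. (y r)\<^sup>2) - real n * (\<Sum>q\<in>?B. (t q)\<^sup>2) + real n * (\<Sum>q\<in>?B. (th q - t q)\<^sup>2)"
    unfolding yG GG by (simp add: power2_diff sum.distrib sum_subtractf sum_distrib_left algebra_simps)
  finally show ?thesis .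
qed

lemma lik_eq_LS_factorization:
  fixes y :: "nat \<Rightarrow> real"
  assumes n_pos: "0 < n" and orth: "design_orthogonal n G p k" and s2: "0 < sigma2"
  defines "t \<equiv> \<lambda>q. theta_LS n G y (fst q) (snd q)"
  shows "lik n G p k sigma2 y th
       = ((1 / sqrt (2 * pi * sigma2)) ^ n * exp (- ((\<Sum>r<n. (y r)\<^sup>2) - real n * (\<Sum>q\<in>blk_idx p k. (t q)\<^sup>2)) / (2 * sigma2)))
         * (\<Prod>q\<in>blk_idx p k. exp (- (th q - t q)\<^sup>2 / (2 * (sigma2 / real n))))"
proof -
  let ?B = "blk_idx p k"
  define A where "A = (\<Sum>r<n. (y r)\<^sup>2) - real n * (\<Sum>q\<in>?B. (t q)\<^sup>2)"
  have "lik n G p k sigma2 y th = (\<Prod>r<n. (1 / sqrt (2 * pi * sigma2)) * exp (- (y r - Gtheta G p k th r)\<^sup>2 / (2 * sigma2)))"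
    unfolding lik_def using s2 by (intro prod.cong) (simp_all add: normal_density_def power2_commute)
  also have "\<dots> = (1 / sqrt (2 * pi * sigma2)) ^ n * (\<Prod>r<n. exp (- (y r - Gtheta G p k th r)\<^sup>2 / (2 * sigma2)))"
    by (rule trans[OF prod.distrib]) simp
  also have "(\<Prod>r<n. exp (- (y r - Gtheta G p k th r)\<^sup>2 / (2 * sigma2)))
      = exp (\<Sum>r<n. - (y r - Gtheta G p k th r)\<^sup>2 / (2 * sigma2))"
    by (rule exp_sum[symmetric]) simp
  also have "(\<Sum>r<n. - (y r - Gtheta G p k th r)\<^sup>2 / (2 * sigma2))
      = - (\<Sum>r<n. (y r - Gtheta G p k th r)\<^sup>2) / (2 * sigma2)"
    by (simp add: sum_divide_distrib sum_negf)
  also have "- (\<Sum>r<n. (y r - Gtheta G p k th r)\<^sup>2) / (2 * sigma2)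
      = - A / (2 * sigma2) + (\<Sum>q\<in>?B. - (th q - t q)\<^sup>2 / (2 * (sigma2 / real n)))"
    unfolding sum_residual_sq_eq[OF n_pos orth] A_def t_def using n_pos s2
    by (simp add: sum_divide_distrib[symmetric] sum_negf sum_distrib_left field_simps)
  finally show ?thesis
    unfolding A_def by (simp add: exp_add exp_sum mult.assoc)
qed

lemma marginal_likelihood_eq:
  fixes y :: "nat \<Rightarrow> real" and lam :: "nat \<Rightarrow> real"
  assumes n_pos: "0 < n" and orth: "design_orthogonal n G p k" and s2: "0 < sigma2"
    and lam: "\<forall>i<p. 0 \<le> lam i"
  defines "t \<equiv> \<lambda>q. theta_LS n G y (fst q) (snd q)" and "a \<equiv> sigma2 / real n"
  shows "(\<integral>th. lik n G p k sigma2 y th \<partial>prior_theta p k lam)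
     = ((1 / sqrt (2 * pi * sigma2)) ^ n * exp (- ((\<Sum>r<n. (y r)\<^sup>2) - real n * (\<Sum>q\<in>blk_idx p k. (t q)\<^sup>2)) / (2 * sigma2)))
      * (\<Prod>q\<in>blk_idx p k. sqrt (a / (a + lam (fst q))) * exp (- (t q)\<^sup>2 / (2 * (a + lam (fst q)))))"
    (is "_ = ?C * _")
proof -
  let ?B = "blk_idx p k"
  have a0: "0 < a" unfolding a_def using n_pos s2 by simp
  interpret prior_product: product_sigma_finite "\<lambda>q. gauss_meas (lam (fst q))"
    unfolding product_sigma_finite_def using prob_space_gauss_meas prob_space_imp_sigma_finite by blast
  have "(\<integral>th. lik n G p k sigma2 y th \<partial>prior_theta p k lam)
      = (\<integral>th. ?C * (\<Prod>q\<in>?B. exp (- (th q - t q)\<^sup>2 / (2 * a))) \<partial>prior_theta p k lam)"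
    unfolding t_def a_def lik_eq_LS_factorization[OF n_pos orth s2] ..
  also have "\<dots> = ?C * (\<integral>th. (\<Prod>q\<in>?B. exp (- (th q - t q)\<^sup>2 / (2 * a))) \<partial>PiM ?B (\<lambda>q. gauss_meas (lam (fst q))))"
    unfolding prior_theta_def by (simp add: case_prod_beta')
  also have "(\<integral>th. (\<Prod>q\<in>?B. exp (- (th q - t q)\<^sup>2 / (2 * a))) \<partial>PiM ?B (\<lambda>q. gauss_meas (lam (fst q))))
      = (\<Prod>q\<in>?B. (\<integral>\<theta>. exp (- (\<theta> - t q)\<^sup>2 / (2 * a)) \<partial>gauss_meas (lam (fst q))))"
  proof (rule prior_product.product_integral_prod[OF finite_blk_idx])
    fix q :: "nat \<times> nat"
    interpret prob_space "gauss_meas (lam (fst q))" by (rule prob_space_gauss_meas)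
    show "integrable (gauss_meas (lam (fst q))) (\<lambda>\<theta>. exp (- (\<theta> - t q)\<^sup>2 / (2 * a)))"
      by (rule integrable_const_bound[where B = 1]) (use a0 in auto)
  qed
  also have "\<dots> = (\<Prod>q\<in>?B. sqrt (a / (a + lam (fst q))) * exp (- (t q)\<^sup>2 / (2 * (a + lam (fst q)))))"
    using lam a0 by (intro prod.cong refl integral_gauss_meas_gaussian_kernel) (auto simp: blk_idx_def)
  finally show ?thesis .
qed

lemma post_obj_factorization:
  fixes y :: "nat \<Rightarrow> real"
  assumes n_pos: "0 < n" and orth: "design_orthogonal n G p k" and s2: "0 < sigma2"
  obtains C where "0 < C"
    "\<And>lam. \<forall>i<p. 0 \<le> lam i \<Longrightarrow> post_obj n G p k sigma2 gamma y lam
       = C * (\<Prod>i<p. block_objective (sigma2 / real n) gamma (k i) (normsq_LS n G k y i) (lam i))"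
proof
  define a where "a = sigma2 / real n"
  let ?C = "(1 / sqrt (2 * pi * sigma2)) ^ n
    * exp (- ((\<Sum>r<n. (y r)\<^sup>2) - real n * (\<Sum>q\<in>blk_idx p k. (theta_LS n G y (fst q) (snd q))\<^sup>2)) / (2 * sigma2))"
  show "0 < ?C" using s2 by simp
  fix lam :: "nat \<Rightarrow> real" assume lam: "\<forall>i<p. 0 \<le> lam i"
  have block: "(\<Prod>j<k i. sqrt (a / (a + lam i)) * exp (- (theta_LS n G y i j)\<^sup>2 / (2 * (a + lam i))))
      = sqrt (a / (a + lam i)) ^ k i * exp (- normsq_LS n G k y i / (2 * (a + lam i)))" for i
    by (simp add: prod.distrib normsq_LS_def exp_sum[symmetric] sum_divide_distrib sum_negf)
  have "(\<integral>th. lik n G p k sigma2 y th \<partial>prior_theta p k lam)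
     = ?C * (\<Prod>i<p. \<Prod>j<k i. sqrt (a / (a + lam i)) * exp (- (theta_LS n G y i j)\<^sup>2 / (2 * (a + lam i))))"
    unfolding marginal_likelihood_eq[OF n_pos orth s2 lam] a_def blk_idx_def
    by (subst prod.Sigma) (auto simp: case_prod_beta)
  also have "\<dots> = ?C * (\<Prod>i<p. sqrt (a / (a + lam i)) ^ k i * exp (- normsq_LS n G k y i / (2 * (a + lam i))))"
    by (simp only: block)
  finally have M: "(\<integral>th. lik n G p k sigma2 y th \<partial>prior_theta p k lam)
      = ?C * (\<Prod>i<p. sqrt (a / (a + lam i)) ^ k i * exp (- normsq_LS n G k y i / (2 * (a + lam i))))" .
  show "post_obj n G p k sigma2 gamma y lam
      = ?C * (\<Prod>i<p. block_objective (sigma2 / real n) gamma (k i) (normsq_LS n G k y i) (lam i))"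
    unfolding post_obj_def M block_objective_def a_def by (simp add: prod.distrib mult.assoc)
qed

lemma normsq_LS_nonneg: "0 \<le> normsq_LS n G k y i"
  unfolding normsq_LS_def by (simp add: sum_nonneg)

lemma lamhat_eq_shrinkage:
  "i < p \<Longrightarrow> lamhat n G p k sigma2 gamma y i
     = shrinkage (sigma2 / real n) gamma (real (k i)) (normsq_LS n G k y i)"
  by (simp add: lamhat_def shrinkage_def mult_ac)

lemma argmax_post_eq_lamhat:
  fixes y :: "nat \<Rightarrow> real"
  assumes n_pos: "0 < n" and k_pos: "\<forall>i<p. 0 < k i" and orth: "design_orthogonal n G p k"
    and s2: "0 < sigma2" and gamma: "0 < gamma"
  shows "argmax_post n G p k sigma2 gamma y = {lamhat n G p k sigma2 gamma y}"
proof -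
  define a where "a = sigma2 / real n"
  define f where "f = (\<lambda>i. block_objective a gamma (k i) (normsq_LS n G k y i))"
  define lh where "lh = lamhat n G p k sigma2 gamma y"
  define P where "P = post_obj n G p k sigma2 gamma y"
  have a: "0 < a" unfolding a_def using n_pos s2 by simp
  obtain C where C0: "0 < C" and CP: "\<And>l. \<forall>i<p. 0 \<le> l i \<Longrightarrow> P l = C * (\<Prod>i<p. f i (l i))"
    unfolding P_def f_def a_def by (rule post_obj_factorization[OF n_pos orth s2, where gamma = gamma and y = y]) blast
  have C: "0 < C" "\<And>l. l \<in> nonneg_params p \<Longrightarrow> P l = C * (\<Prod>i<p. f i (l i))"
    using C0 CP by (auto simp: nonneg_params_def)
  have lh: "lh \<in> nonneg_params p" unfolding lh_def nonneg_params_def lamhat_def by simp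
  have f_pos: "0 < f i l" if "0 \<le> l" for i l
    unfolding f_def using a gamma that by (rule block_objective_pos)
  have f_less: "f i l < f i (lh i)" if "i < p" "0 \<le> l" "l \<noteq> lh i" for i l
    using that a gamma k_pos normsq_LS_nonneg
    unfolding f_def lh_def lamhat_eq_shrinkage[OF that(1)] a_def by (intro block_objective_less) auto
  have f_le: "f i l \<le> f i (lh i)" if "i < p" "0 \<le> l" for i l
    using f_less[OF that] by (cases "l = lh i") auto
  have P_le: "P l \<le> P lh" if l: "l \<in> nonneg_params p" for l
    unfolding C(2)[OF l] C(2)[OF lh] using C(1) l f_pos f_le
    by (auto intro!: mult_left_mono prod_mono simp: nonneg_params_def less_imp_le)
  have P_less: "P l < P lh" if l: "l \<in> nonneg_params p" and ne: "l \<noteq> lh" for l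
  proof -
    have "\<exists>i0<p. l i0 \<noteq> lh i0"
    proof (rule ccontr)
      assume "\<not> (\<exists>i0<p. l i0 \<noteq> lh i0)"
      then have "l i = lh i" for i using l lh by (cases "i < p") (auto simp: nonneg_params_def)
      with ne show False by blast
    qed
    then obtain i0 where i0: "i0 < p" "l i0 \<noteq> lh i0" by blast
    have "(\<Prod>i<p. f i (l i)) < (\<Prod>i<p. f i (lh i))"
      using i0 l lh f_pos f_le f_less by (intro prod_mono_strict[of i0]) (auto simp: nonneg_params_def less_imp_le)
    then show ?thesis unfolding C(2)[OF l] C(2)[OF lh] using C(1) by simp
  qed
  show ?thesis
    using lh P_le P_less unfolding argmax_post_def P_def[symmetric] lh_def[symmetric]
    by (auto simp: not_le[symmetric])
qed

lemma lamhat_tendsto: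
  assumes "i < p" "0 < k i"
  shows "((\<lambda>gamma. lamhat n G p k sigma2 gamma y i) \<longlongrightarrow>
           max 0 (normsq_LS n G k y i / real (k i) - sigma2 / real n)) (at_right 0)"
  using assms by (simp add: lamhat_eq_shrinkage tendsto_shrinkage normsq_LS_nonneg)

text \<open>The rows of (G^(i))^T / sqrt n are orthonormal, so the noise part of the least-squares
  estimate is again a standard Gaussian vector.\<close>

lemma normsq_LS_Gtheta_noise:
  assumes n_pos: "0 < n" and orth: "design_orthogonal n G p k" and i: "i < p" and s2: "0 < sigma2"
  shows "normsq_LS n G k (\<lambda>r\<in>{..<n}. Gtheta G p k thbar r + sqrt sigma2 * z r) i * real n / sigma2
       = (\<Sum>j<k i. (sqrt (real n) * thbar (i, j) / sqrt sigma2 + (\<Sum>r<n. G i r j / sqrt (real n) * z r))\<^sup>2)"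
proof -
  define \<sigma> where "\<sigma> = sqrt sigma2"
  define q where "q = sqrt (real n)"
  have sp: "0 < \<sigma>" and qp: "0 < q" using s2 n_pos by (simp_all add: \<sigma>_def q_def)
  have s2e: "sigma2 = \<sigma>\<^sup>2" and ne: "real n = q\<^sup>2" using s2 by (simp_all add: \<sigma>_def q_def)
  have LS: "theta_LS n G (\<lambda>r\<in>{..<n}. Gtheta G p k thbar r + \<sigma> * z r) i j
      = thbar (i, j) + \<sigma> / q\<^sup>2 * (\<Sum>r<n. G i r j * z r)" if j: "j < k i" for j
  proof -
    have "(\<Sum>r<n. G i r j * (\<lambda>r\<in>{..<n}. Gtheta G p k thbar r + \<sigma> * z r) r)
        = (\<Sum>r<n. G i r j * Gtheta G p k thbar r) + \<sigma> * (\<Sum>r<n. G i r j * z r)"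
      by (simp add: sum.distrib sum_distrib_left algebra_simps)
    then show ?thesis
      unfolding theta_LS_def sum_G_Gtheta[OF orth i j] ne[symmetric] using n_pos by (simp add: field_simps)
  qed
  have "normsq_LS n G k (\<lambda>r\<in>{..<n}. Gtheta G p k thbar r + \<sigma> * z r) i * real n / sigma2
      = (\<Sum>j<k i. (thbar (i, j) + \<sigma> / q\<^sup>2 * (\<Sum>r<n. G i r j * z r))\<^sup>2 * q\<^sup>2 / \<sigma>\<^sup>2)"
    unfolding normsq_LS_def s2e ne by (simp add: LS sum_distrib_right sum_divide_distrib)
  also have "\<dots> = (\<Sum>j<k i. (q * thbar (i, j) / \<sigma> + (\<Sum>r<n. G i r j / q * z r))\<^sup>2)"
    using sp qp by (intro sum.cong) (simp_all add: sum_divide_distrib[symmetric] field_simps power2_eq_square)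
  finally show ?thesis unfolding \<sigma>_def q_def .
qed

lemma emeasure_normsq_LS_atMost:
  fixes thbar :: "nat \<times> nat \<Rightarrow> real"
  assumes n_pos: "0 < n" and orth: "design_orthogonal n G p k" and i: "i < p" and s2: "0 < sigma2"
  defines "Y \<equiv> y_given_theta n G p k sigma2 thbar"
  shows "emeasure Y {y \<in> space Y. normsq_LS n G k y i * real n / sigma2 \<le> c}
       = (\<integral>\<^sup>+w. indicator {..c} (\<Sum>j<k i. (sqrt (real n) * thbar (i, j) / sqrt sigma2 + w j)\<^sup>2)
            \<partial>std_gaussian {..<k i})"
proof -
  define \<Phi> where "\<Phi> = (\<lambda>y. normsq_LS n G k y i * real n / sigma2)"
  define A where "A = (\<lambda>j r. G i r j / sqrt (real n))"
  define g where "g = (\<lambda>w. indicator {..c} (\<Sum>j<k i. (sqrt (real n) * thbar (i, j) / sqrt sigma2 + w j)\<^sup>2) :: ennreal)"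
  have \<Phi>m[measurable]: "\<Phi> \<in> borel_measurable (PiM {..<n} (\<lambda>_. borel))"
    unfolding \<Phi>_def normsq_LS_def theta_LS_def by measurable
  have sY: "sets Y = sets (PiM {..<n} (\<lambda>_. borel))"
    unfolding Y_def y_given_theta_def by (intro sets_PiM_cong) auto
  have A: "\<forall>j\<in>{..<k i}. \<forall>j'\<in>{..<k i}. (\<Sum>r\<in>{..<n}. A j r * A j' r) = (if j = j' then 1 else 0)"
  proof (intro ballI)
    fix j j' assume "j \<in> {..<k i}" "j' \<in> {..<k i}"
    then have "(\<Sum>r<n. G i r j * G i r j') = (if j = j' then real n else 0)"
      using orth i by (auto simp: design_orthogonal_def)
    then show "(\<Sum>r\<in>{..<n}. A j r * A j' r) = (if j = j' then 1 else 0)"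
      using n_pos by (simp add: A_def sum_divide_distrib[symmetric])
  qed
  have "\<Phi> \<in> borel_measurable Y"
    using \<Phi>m sY by (simp cong: measurable_cong_sets)
  then have "{y \<in> space Y. \<Phi> y \<le> c} \<in> sets Y" by measurable
  then have "emeasure Y {y \<in> space Y. \<Phi> y \<le> c} = (\<integral>\<^sup>+y. indicator {y \<in> space Y. \<Phi> y \<le> c} y \<partial>Y)"
    by simp
  also have "\<dots> = (\<integral>\<^sup>+y. indicator {..c} (\<Phi> y) \<partial>Y)"
    by (intro nn_integral_cong) (simp add: indicator_def)
  also have "\<dots> = (\<integral>\<^sup>+z. indicator {..c} (\<Phi> (\<lambda>r\<in>{..<n}. Gtheta G p k thbar r + sqrt sigma2 * z r))
      \<partial>std_gaussian {..<n})"
    unfolding Y_def y_given_theta_def using s2 by (intro nn_integral_PiM_normal_density) simp_all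
  also have "\<dots> = (\<integral>\<^sup>+z. g (\<lambda>j\<in>{..<k i}. \<Sum>r\<in>{..<n}. A j r * z r) \<partial>std_gaussian {..<n})"
    by (intro nn_integral_cong)
      (simp add: \<Phi>_def g_def A_def normsq_LS_Gtheta_noise[OF n_pos orth i s2])
  also have "\<dots> = (\<integral>\<^sup>+w. g w \<partial>std_gaussian {..<k i})"
    using A unfolding g_def by (intro nn_integral_std_gaussian_orthonormal) auto
  finally show ?thesis unfolding \<Phi>_def g_def .
qed

lemma prob_lamhat_eq_0:
  fixes thbar :: "nat \<times> nat \<Rightarrow> real"
  assumes n_pos: "0 < n" and k_pos: "0 < k i" and orth: "design_orthogonal n G p k"
    and i: "i < p" and s2: "0 < sigma2" and gamma: "0 < gamma"
  defines "Y \<equiv> y_given_theta n G p k sigma2 thbar"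
  shows "measure Y {y \<in> space Y. lamhat n G p k sigma2 gamma y i = 0}
       = measure (nc_chi2 (k i) ((\<Sum>j<k i. (thbar (i,j))\<^sup>2) * real n / sigma2))
           {..real (k i) + 2 * gamma * sigma2 / real n}"
proof -
  define c where "c = real (k i) + 2 * gamma * sigma2 / real n"
  define b where "b = (\<lambda>j. sqrt (real n) * thbar (i, j) / sqrt sigma2)"
  have b: "(\<Sum>j<k i. (b j)\<^sup>2) = (\<Sum>j<k i. (thbar (i,j))\<^sup>2) * real n / sigma2"
  proof -
    have "(\<Sum>j<k i. (b j)\<^sup>2) = (\<Sum>j<k i. (thbar (i,j))\<^sup>2 * real n / sigma2)"
      using s2 by (intro sum.cong) (simp_all add: b_def power_divide power_mult_distrib)
    then show ?thesis by (simp add: sum_distrib_right sum_divide_distrib)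
  qed
  have "lamhat n G p k sigma2 gamma y i = 0
      \<longleftrightarrow> normsq_LS n G k y i / (sigma2 / real n) \<le> real (k i) + 2 * gamma * (sigma2 / real n)" for y
    unfolding lamhat_eq_shrinkage[OF i] using n_pos s2 gamma
    by (intro shrinkage_eq_0_iff) (simp_all add: normsq_LS_nonneg)
  then have "{y \<in> space Y. lamhat n G p k sigma2 gamma y i = 0}
      = {y \<in> space Y. normsq_LS n G k y i * real n / sigma2 \<le> c}"
    by (simp add: c_def)
  then have "measure Y {y \<in> space Y. lamhat n G p k sigma2 gamma y i = 0}
      = enn2real (\<integral>\<^sup>+w. indicator {..c} (\<Sum>j<k i. (b j + w j)\<^sup>2) \<partial>std_gaussian {..<k i})"
    unfolding Y_def b_def by (simp add: measure_def emeasure_normsq_LS_atMost[OF n_pos orth i s2])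
  also have "\<dots> = enn2real (\<integral>\<^sup>+w. indicator {..c} (\<Sum>j<k i. ((if j = 0 then sqrt (\<Sum>j<k i. (b j)\<^sup>2) else 0) + w j)\<^sup>2)
      \<partial>std_gaussian {..<k i})"
    using k_pos by (subst nn_integral_std_gaussian_shift_norm) auto
  finally show ?thesis unfolding b c_def by (simp add: measure_nc_chi2_atMost)
qed

theorem proposition9:
  fixes n p :: nat and k :: "nat \<Rightarrow> nat" and G :: "nat \<Rightarrow> nat \<Rightarrow> nat \<Rightarrow> real"
    and sigma2 :: real
  assumes n_pos: "0 < n"
    and k_pos: "\<forall>i<p. 0 < k i"
    and orth: "\<forall>i<p. \<forall>i'<p. \<forall>j<k i. \<forall>j'<k i'.
                 (\<Sum>r<n. G i r j * G i' r j') = (if i = i' \<and> j = j' then real n else 0)"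
    and sigma2_pos: "0 < sigma2"
  shows "(\<forall>gamma>0. \<forall>y. argmax_post n G p k sigma2 gamma y = {lamhat n G p k sigma2 gamma y})
       \<and> (\<forall>y. \<forall>i<p. ((\<lambda>gamma. lamhat n G p k sigma2 gamma y i) \<longlongrightarrow>
              max 0 (normsq_LS n G k y i / real (k i) - sigma2 / real n)) (at_right 0))
       \<and> (\<forall>gamma>0. \<forall>thbar. \<forall>i<p.
            measure (y_given_theta n G p k sigma2 thbar)
              {y \<in> space (y_given_theta n G p k sigma2 thbar). lamhat n G p k sigma2 gamma y i = 0}
            = measure (nc_chi2 (k i) ((\<Sum>j<k i. (thbar (i,j))\<^sup>2) * real n / sigma2))
                {..real (k i) + 2 * gamma * sigma2 / real n})"
proof -
  have design: "design_orthogonal n G p k"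
    using orth unfolding design_orthogonal_def .
  show ?thesis
    using argmax_post_eq_lamhat[OF n_pos k_pos design sigma2_pos]
      lamhat_tendsto[of _ p k] k_pos prob_lamhat_eq_0[OF n_pos _ design _ sigma2_pos]
    by auto
qed

end
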